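(* Let $i\in I$ and $k\in\mathbb{Z}$. For any homogeneous element $u\in\widehat{\mathcal{A}}$, we have $$E'_{i,k}(u)=q_i^{(-1)^k\langle h_i,\mathrm{wt}(u)\rangle+1}uf_{i,k+1},\qquad E^\star_{i,k}(u)=q_i^{(-1)^k\langle h_i,\mathrm{wt}(u)\rangle+1}f_{i,k-1}u.$$
   Context: Let $\mathsf{C}=(c_{i,j})_{i,j\in I}$ be a finite-type Cartan matrix with simple roots $\alpha_i$, coroots $h_i$, $(\alpha_i,\alpha_j)=\mathsf{d}_ic_{i,j}$ ($\min\mathsf{d}_i=1$), $q_i=q^{\mathsf{d}_i}$, $\mathbf{k}=\mathbb{Q}(q^{1/2})$. $\widehat{\mathcal{A}}$ is the bosonic extension generated by $f_{i,p}$ ($i\in I,p\in\mathbb{Z}$) with quantum Serre relations among $\{f_{i,p}\}_{i\in I}$ for fixed $p$, $f_{i,m}f_{j,p}=q_i^{(-1)^{p-m+1}c_{i,j}}f_{j,p}f_{i,m}$ ($p>m+1$), $f_{i,p}f_{j,p+1}=q_i^{c_{i,j}}f_{j,p+1}f_{i,p}+\delta_{i,j}(1-q_i^2)$, weights $\mathrm{wt}(f_{i,p})=(-1)^{p+1}\alpha_i$. The bilinear form $(\!(\cdot,\cdot)\!)$: for homogeneous $x=x_b\cdots x_a$, $y=y_b\cdots y_a$ with $x_k,y_k$ weight vectors in the subalgebra generated by $f_{i,k}$ ($i\in I$), $(\!(x,y)\!)=\prod_k\kappa^{|\mathrm{wt}(x_k)|+|\mathrm{wt}(y_k)|}(x_k,y_k)_L$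 with Lusztig's form via $f_{i,k}\mapsto f_i$ ($(f_i,f_j)_L=\delta_{i,j}/(1-q_i^2)$), $\kappa_i=q_i^{1/2}(q_i^{-1}-q_i)$, $\kappa^{\sum n_i\alpha_i}=\prod\kappa_i^{n_i}$, $|\sum n_i\alpha_i|=\sum|n_i|\alpha_i$; it is symmetric and non-degenerate. $E'_{i,k},E^\star_{i,k}$ are the adjoint operators: $(\!(E'_{i,k}(u),v)\!)=(\!(u,f_{i,k}v)\!)$, $(\!(E^\star_{i,k}(u),v)\!)=(\!(u,vf_{i,k})\!)$. *)

theory Defs
  imports "HOL-Computational_Algebra.Fraction_Field" "HOL-Computational_Algebra.Polynomial" "HOL-Library.Function_Algebras"
begin

section \<open>Scalars: k = Q(q^(1/2)), with tt = q^(1/2)\<close>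

type_synonym K = "rat poly fract"

definition tt :: K where "tt = Fraction_Field.Fract [:0, 1:] 1"

text \<open>q_i^n = q^(d_i n) = tt^(2 d_i n), n an integer.\<close>
definition qi :: "('i \<Rightarrow> nat) \<Rightarrow> 'i \<Rightarrow> int \<Rightarrow> K" where
  "qi d i n = tt powi (2 * int (d i) * n)"

definition sgn_pow :: "int \<Rightarrow> int" where
  "sgn_pow n = (if even n then 1 else -1)"

definition finite_cartan :: "('i::finite \<Rightarrow> 'i \<Rightarrow> int) \<Rightarrow> ('i \<Rightarrow> nat) \<Rightarrow> bool" where
  "finite_cartan C d \<longleftrightarrow>
     (\<forall>i. C i i = 2) \<and> (\<forall>i j. i \<noteq> j \<longrightarrow> C i j \<le> 0) \<and>
     (\<forall>i. d i > 0) \<and> (\<exists>i. d i = 1) \<and>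
     (\<forall>i j. int (d i) * C i j = int (d j) * C j i) \<and>
     (\<forall>x :: 'i \<Rightarrow> real. x \<noteq> (\<lambda>_. 0) \<longrightarrow>
        (\<Sum>i\<in>UNIV. \<Sum>j\<in>UNIV. x i * real (d i) * real_of_int (C i j) * x j) > 0)"

section \<open>Free algebra on the letters f_{i,p}: finitely supported functions on words\<close>

definition supp_fin :: "('a list \<Rightarrow> K) \<Rightarrow> bool" where
  "supp_fin x \<longleftrightarrow> finite {w. x w \<noteq> 0}"

definition mono :: "'a list \<Rightarrow> 'a list \<Rightarrow> K" where
  "mono w = (\<lambda>w'. if w' = w then 1 else 0)"

definition gen :: "'a \<Rightarrow> 'a list \<Rightarrow> K" where
  "gen a = mono [a]"

definition fmult :: "('a list \<Rightarrow> K) \<Rightarrow> ('a list \<Rightarrow> K) \<Rightarrow> 'a list \<Rightarrow> K" where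
  "fmult x y = (\<lambda>w. \<Sum>n\<in>{0..length w}. x (take n w) * y (drop n w))"

definition smul :: "K \<Rightarrow> ('a list \<Rightarrow> K) \<Rightarrow> 'a list \<Rightarrow> K" where
  "smul c x = (\<lambda>w. c * x w)"

definition qint :: "K \<Rightarrow> nat \<Rightarrow> K" where
  "qint x m = (x ^ m - inverse x ^ m) / (x - inverse x)"

definition qfact :: "K \<Rightarrow> nat \<Rightarrow> K" where
  "qfact x m = (\<Prod>r\<in>{1..m}. qint x r)"

definition qbin :: "K \<Rightarrow> nat \<Rightarrow> nat \<Rightarrow> K" where
  "qbin x m s = qfact x m / (qfact x s * qfact x (m - s))"

definition serre :: "('i \<Rightarrow> 'i \<Rightarrow> int) \<Rightarrow> ('i \<Rightarrow> nat) \<Rightarrow> 'i \<Rightarrow> 'i \<Rightarrow> int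
                     \<Rightarrow> ('i \<times> int) list \<Rightarrow> K" where
  "serre C d i j p = (let n = nat (1 - C i j) in
     (\<lambda>w. \<Sum>s\<in>{0..n}. (-1) ^ s * qbin (qi d i 1) n s *
           mono (replicate (n - s) (i, p) @ [(j, p)] @ replicate s (i, p)) w))"

definition relators :: "('i \<Rightarrow> 'i \<Rightarrow> int) \<Rightarrow> ('i \<Rightarrow> nat) \<Rightarrow> (('i \<times> int) list \<Rightarrow> K) set" where
  "relators C d =
     {serre C d i j p | i j p. i \<noteq> j}
   \<union> {fmult (gen (i, m)) (gen (j, p))
        - smul (qi d i (sgn_pow (p - m + 1) * C i j)) (fmult (gen (j, p)) (gen (i, m)))
       | i j m p. p > m + 1}
   \<union> {fmult (gen (i, p)) (gen (j, p + 1))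
        - smul (qi d i (C i j)) (fmult (gen (j, p + 1)) (gen (i, p)))
        - (if i = j then smul (1 - qi d i 2) (mono []) else (\<lambda>_. 0))
       | i j p. True}"

text \<open>Two-sided ideal of the free algebra generated by the relators; the bosonic
  extension is the quotient of the finitely supported functions by it.\<close>
inductive_set relideal :: "('i \<Rightarrow> 'i \<Rightarrow> int) \<Rightarrow> ('i \<Rightarrow> nat) \<Rightarrow> (('i \<times> int) list \<Rightarrow> K) set"
  for C d where
  zero: "(\<lambda>_. 0) \<in> relideal C d"
| rel: "r \<in> relators C d \<Longrightarrow> fmult (mono u) (fmult r (mono v)) \<in> relideal C d"
| add: "x \<in> relideal C d \<Longrightarrow> y \<in> relideal C d \<Longrightarrow> x + y \<in> relideal C d"
| scal: "x \<in> relideal C d \<Longrightarrow> smul c x \<in> relideal C d"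

text \<open>Weights as coefficient vectors in the root lattice; wt f_{i,p} = (-1)^(p+1) alpha_i.\<close>
definition wtw :: "('i \<times> int) list \<Rightarrow> 'i \<Rightarrow> int" where
  "wtw w = (\<lambda>j. sum_list (map (\<lambda>(i, p). if i = j then sgn_pow (p + 1) else 0) w))"

definition homog :: "('i \<Rightarrow> int) \<Rightarrow> (('i \<times> int) list \<Rightarrow> K) \<Rightarrow> bool" where
  "homog \<beta> u \<longleftrightarrow> supp_fin u \<and> (\<forall>w. u w \<noteq> 0 \<longrightarrow> wtw w = \<beta>)"

definition hpair :: "('i::finite \<Rightarrow> 'i \<Rightarrow> int) \<Rightarrow> 'i \<Rightarrow> ('i \<Rightarrow> int) \<Rightarrow> int" where
  "hpair C i \<beta> = (\<Sum>j\<in>UNIV. C i j * \<beta> j)"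

text \<open>(1,1)_L = 1, (f_i u, v)_L = (1 - q_i^2)^(-1) (u, e_i' v)_L, where e_i' is the
  skew derivation with e_i'(f_j) = delta_ij, e_i'(xy) = e_i'(x) y + q_i^(<h_i,wt x>) x e_i'(y).\<close>
fun Lw :: "('i \<Rightarrow> 'i \<Rightarrow> int) \<Rightarrow> ('i \<Rightarrow> nat) \<Rightarrow> 'i list \<Rightarrow> 'i list \<Rightarrow> K" where
  "Lw C d [] v = (if v = [] then 1 else 0)"
| "Lw C d (i # u) v = inverse (1 - qi d i 2) *
     (\<Sum>s\<in>{..<length v}. if v ! s = i
        then qi d i (- (\<Sum>t<s. C i (v ! t))) * Lw C d u (take s v @ drop (Suc s) v)
        else 0)"

text \<open>(x_k, y_k)_L via f_{i,k} |-> f_i, extended bilinearly.\<close>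
definition LusF :: "('i \<Rightarrow> 'i \<Rightarrow> int) \<Rightarrow> ('i \<Rightarrow> nat) \<Rightarrow> (('i \<times> int) list \<Rightarrow> K)
                    \<Rightarrow> (('i \<times> int) list \<Rightarrow> K) \<Rightarrow> K" where
  "LusF C d x y = (\<Sum>w\<in>{w. x w \<noteq> 0}. \<Sum>w'\<in>{w'. y w' \<noteq> 0}.
                     x w * y w' * Lw C d (map fst w) (map fst w'))"

definition kappa_i :: "('i \<Rightarrow> nat) \<Rightarrow> 'i \<Rightarrow> K" where
  "kappa_i d i = tt ^ d i * (inverse (tt ^ (2 * d i)) - tt ^ (2 * d i))"

definition kappa :: "('i::finite \<Rightarrow> nat) \<Rightarrow> ('i \<Rightarrow> nat) \<Rightarrow> K" where
  "kappa d \<gamma> = (\<Prod>i\<in>UNIV. kappa_i d i ^ \<gamma> i)"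

text \<open>Weight vectors of the subalgebra generated by the f_{i,k} (i in I), k fixed, whose
  weight has absolute value gamma (i.e. weight (-1)^(k+1) gamma).\<close>
definition Ak_hom :: "int \<Rightarrow> ('i \<Rightarrow> nat) \<Rightarrow> (('i \<times> int) list \<Rightarrow> K) set" where
  "Ak_hom k \<gamma> = {x. supp_fin x \<and> (\<forall>w. x w \<noteq> 0 \<longrightarrow>
       (\<forall>l\<in>set w. snd l = k) \<and> (\<forall>j. length (filter (\<lambda>l. fst l = j) w) = \<gamma> j))}"

fun pd :: "(int \<Rightarrow> ('a list \<Rightarrow> K)) \<Rightarrow> int \<Rightarrow> nat \<Rightarrow> 'a list \<Rightarrow> K" where
  "pd X a 0 = X a"
| "pd X a (Suc n) = fmult (X (a + int (Suc n))) (pd X a n)"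

text \<open>B represents the form ((.,.)) on representatives in the free algebra.\<close>
definition bosonic_form :: "('i::finite \<Rightarrow> 'i \<Rightarrow> int) \<Rightarrow> ('i \<Rightarrow> nat)
     \<Rightarrow> ((('i \<times> int) list \<Rightarrow> K) \<Rightarrow> (('i \<times> int) list \<Rightarrow> K) \<Rightarrow> K) \<Rightarrow> bool" where
  "bosonic_form C d B \<longleftrightarrow>
     (\<forall>x y z. supp_fin x \<longrightarrow> supp_fin y \<longrightarrow> supp_fin z \<longrightarrow>
        B (x + y) z = B x z + B y z \<and> B z (x + y) = B z x + B z y) \<and>
     (\<forall>c x y. supp_fin x \<longrightarrow> supp_fin y \<longrightarrow>
        B (smul c x) y = c * B x y \<and> B x (smul c y) = c * B x y) \<and>
     (\<forall>x x' y. supp_fin x \<longrightarrow> supp_fin x' \<longrightarrow> supp_fin y \<longrightarrow> x - x' \<in> relideal C d \<longrightarrow>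
        B x y = B x' y \<and> B y x = B y x') \<and>
     (\<forall>x y. supp_fin x \<longrightarrow> supp_fin y \<longrightarrow> B x y = B y x) \<and>
     (\<forall>x. supp_fin x \<longrightarrow> (\<forall>y. supp_fin y \<longrightarrow> B x y = 0) \<longrightarrow> x \<in> relideal C d) \<and>
     (\<forall>a n X Y gx gy.
        (\<forall>k\<in>{a..a + int n}. X k \<in> Ak_hom k (gx k) \<and> Y k \<in> Ak_hom k (gy k)) \<longrightarrow>
        B (pd X a n) (pd Y a n) =
          (\<Prod>k\<in>{a..a + int n}. kappa d (\<lambda>j. gx k j + gy k j) * LusF C d (X k) (Y k)))"

text \<open>e = E'_{i,k}(u) and e = E*_{i,k}(u) (adjoint characterisation, unique mod the ideal
  by non-degeneracy).\<close>
definition is_Eprime where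
  "is_Eprime B i k u e \<longleftrightarrow> supp_fin e \<and>
     (\<forall>v. supp_fin v \<longrightarrow> B e v = B u (fmult (gen (i, k)) v))"

definition is_Estar where
  "is_Estar B i k u e \<longleftrightarrow> supp_fin e \<and>
     (\<forall>v. supp_fin v \<longrightarrow> B e v = B u (fmult v (gen (i, k))))"

end

(* Both sides of each identity only see u and v through the commutation relations between
   different levels, and every word straightens modulo these relations into a combination of
   ordered monomials (levels weakly decreasing) of the same weight; so it suffices to compare
   them on ordered monomials x and z. There the form factorises over the levels into
   kappa-normalised Lusztig forms. Carrying f_{i,k+1} from the right end of x into its level
   k+1 block (past the lower levels, then through the level k block, where the q-boson
   relation creates a skew derivation term), and f_{i,k} from the left end of z into its
   level k block, turns both sides into sums of two products of single-level forms. They agree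
   term by term by Lusztig's recursions for the adjoints of left and right multiplication by
   f_i, together with kappa_i^2 = q_i^-1 (1 - q_i^2)^2. The formula for E* follows from the
   one for E' by symmetry of the form, since the form pairs only equal weights. *)

theory Submission
  imports Defs
begin

lemma tt_nonzero: "tt \<noteq> 0"
  unfolding tt_def by (simp add: eq_fract Zero_fract_def)

lemma tt_power_neq_1:
  assumes "n > 0"
  shows "tt ^ n \<noteq> 1"
proof
  have "tt ^ n = Fraction_Field.Fract ([:0, 1:] ^ n) 1"
    unfolding tt_def by (induction n) (simp_all add: One_fract_def)
  moreover assume "tt ^ n = 1"
  ultimately have "([:0, 1:] :: rat poly) ^ n = 1"
    by (simp add: One_fract_def eq_fract)
  then have "degree (([:0, 1:] :: rat poly) ^ n) = 0" by simp
  then show False using degree_linear_power[of "0::rat" n] assms by simp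
qed

lemma qi_add: "qi d i (a + b) = qi d i a * qi d i b"
  unfolding qi_def using tt_nonzero by (simp add: distrib_left power_int_add)

lemma qi_0 [simp]: "qi d i 0 = 1"
  unfolding qi_def by simp

lemma qi_nonzero [simp]: "qi d i n \<noteq> 0"
  unfolding qi_def using tt_nonzero by simp

lemma qi_uminus: "qi d i (- a) = inverse (qi d i a)"
  unfolding qi_def using tt_nonzero by (simp add: power_int_minus)

lemma qi_symmetrized:
  "int (d j) * C j i = int (d i) * C i j \<Longrightarrow> qi d j (s * C j i) = qi d i (s * C i j)"
  unfolding qi_def by (simp add: algebra_simps) (metis mult.assoc mult.left_commute)

lemma one_minus_qi_2_nonzero:
  assumes "d i > 0"
  shows "1 - qi d i 2 \<noteq> 0"
proof -
  have "qi d i 2 = tt ^ (4 * d i)"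
    unfolding qi_def by (simp add: power_int_def nat_mult_distrib)
  then show ?thesis using tt_power_neq_1[of "4 * d i"] assms by simp
qed

lemma kappa_i_square: "kappa_i d i ^ 2 = qi d i (-1) * (1 - qi d i 2) ^ 2"
proof -
  define t where "t = tt ^ d i"
  have t: "t \<noteq> 0" unfolding t_def using tt_nonzero by simp
  have t2: "tt ^ (2 * d i) = t ^ 2"
    unfolding t_def by (simp add: power_mult[symmetric] mult.commute)
  have "qi d i (-1) = inverse (t ^ 2)"
    unfolding qi_def t2[symmetric] by (simp add: power_int_def power_inverse nat_mult_distrib)
  moreover have "qi d i 2 = t ^ 2 * t ^ 2"
    unfolding qi_def t2[symmetric] by (simp add: power_int_def nat_mult_distrib power_add[symmetric])
  moreover have "kappa_i d i = t * (inverse (t ^ 2) - t ^ 2)"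
    unfolding kappa_i_def t2 t_def ..
  ultimately show ?thesis
    using t by (simp only:) (simp add: field_simps power2_eq_square)
qed

lemma kappa_i_nonzero:
  assumes "d i > 0"
  shows "kappa_i d i \<noteq> 0"
  using kappa_i_square[of d i] one_minus_qi_2_nonzero[of d i] assms
  by (metis mult_eq_0_iff power_not_zero qi_nonzero zero_power2)

lemma kappa_nonzero: "\<forall>j. d j > 0 \<Longrightarrow> kappa d g \<noteq> 0"
  unfolding kappa_def by (simp add: kappa_i_nonzero)

text \<open>The factor \<open>\<kappa>\<^sub>i / (1 - q\<^sub>i\<^sup>2)\<close> gained by appending \<open>f\<^sub>i\<close> to a level (Lusztig's
  recursion and one more \<open>\<kappa>\<^sub>i\<close>) and the factor \<open>(1 - q\<^sub>i\<^sup>2) / \<kappa>\<^sub>i\<close> produced by the q-boson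
  relation (and one \<open>\<kappa>\<^sub>i\<close> less) differ exactly by \<open>q\<^sub>i\<close>; this is where the normalisation \<open>\<kappa>\<close>
  of the form enters.\<close>
lemma qi_kappa_i_balance:
  assumes "d i > 0"
  shows "qi d i 1 * kappa_i d i * inverse (1 - qi d i 2) = (1 - qi d i 2) * inverse (kappa_i d i)"
proof -
  have "qi d i 1 * kappa_i d i ^ 2 = (1 - qi d i 2) ^ 2"
    unfolding kappa_i_square qi_uminus by simp
  then show ?thesis
    using kappa_i_nonzero[of d i] one_minus_qi_2_nonzero[of d i] assms
    by (simp add: field_simps power2_eq_square)
qed

lemma kappa_empty [simp]: "kappa d (count {#}) = 1"
  unfolding kappa_def by simp

lemma kappa_add_mset: "kappa d (count (add_mset i M)) = kappa d (count M) * kappa_i d i"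
proof -
  have "kappa d (count (add_mset i M)) =
        (\<Prod>j\<in>UNIV. kappa_i d j ^ count M j * (if j = i then kappa_i d j else 1))"
    unfolding kappa_def by (intro prod.cong) auto
  also have "\<dots> = kappa d (count M) * kappa_i d i"
    unfolding kappa_def by (simp add: prod.distrib prod.delta)
  finally show ?thesis .
qed

lemma sgn_pow_succ: "sgn_pow (m + 1) = - sgn_pow m"
  unfolding sgn_pow_def by auto

lemma sgn_pow_square: "sgn_pow a * sgn_pow a = 1"
  unfolding sgn_pow_def by auto

lemma mono_apply: "mono u w = (if w = u then 1 else 0)"
  by (simp add: mono_def)

lemma fmult_mono_left:
  "fmult (mono u) x = (\<lambda>w. if take (length u) w = u then x (drop (length u) w) else 0)"
proof
  fix w
  have "fmult (mono u) x w =
        (\<Sum>n\<in>{0..length w}. if n = length u \<and> take (length u) w = u then x (drop (length u) w) else 0)"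
    unfolding fmult_def by (intro sum.cong) (auto simp: mono_apply)
  also have "\<dots> = (if take (length u) w = u then x (drop (length u) w) else 0)"
    by (auto simp: sum.delta' dest: sym[THEN arg_cong[where f = length]])
  finally show "fmult (mono u) x w = \<dots>" .
qed

lemma fmult_mono_mono: "fmult (mono u) (mono v) = mono (u @ v)"
  by (rule ext) (metis append_eq_conv_conj fmult_mono_left mono_apply)

lemma fmult_add_left: "fmult (x + y) z = fmult x z + fmult y z"
  unfolding fmult_def by (auto simp: distrib_right sum.distrib)

lemma fmult_add_right: "fmult z (x + y) = fmult z x + fmult z y"
  unfolding fmult_def by (auto simp: distrib_left sum.distrib)

lemma fmult_diff_left: "fmult (x - y) z = fmult x z - fmult y z"
  unfolding fmult_def by (auto simp: fun_diff_def left_diff_distrib sum_subtractf)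

lemma fmult_diff_right: "fmult z (x - y) = fmult z x - fmult z y"
  unfolding fmult_def by (auto simp: fun_diff_def right_diff_distrib sum_subtractf)

lemma fmult_smul_left: "fmult (smul c x) z = smul c (fmult x z)"
  unfolding fmult_def smul_def by (auto simp: sum_distrib_left mult.assoc)

lemma fmult_smul_right: "fmult z (smul c x) = smul c (fmult z x)"
  unfolding fmult_def smul_def by (auto simp: sum_distrib_left mult.left_commute)

lemma fmult_zero_left [simp]: "fmult (\<lambda>_. 0) z = (\<lambda>_. 0)"
  unfolding fmult_def by simp

lemma fmult_zero_right [simp]: "fmult z (\<lambda>_. 0) = (\<lambda>_. 0)"
  unfolding fmult_def by simp

lemma supp_fin_mono [simp]: "supp_fin (mono u)"
  unfolding supp_fin_def mono_def by (auto intro: finite_subset[of _ "{u}"])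

lemma supp_fin_gen [simp]: "supp_fin (gen a)"
  by (simp add: gen_def)

lemma supp_fin_zero [simp]: "supp_fin (\<lambda>_. 0)"
  unfolding supp_fin_def by simp

lemma supp_fin_add [simp]: "supp_fin x \<Longrightarrow> supp_fin y \<Longrightarrow> supp_fin (x + y)"
  unfolding supp_fin_def
  by (rule finite_subset[of _ "{w. x w \<noteq> 0} \<union> {w. y w \<noteq> 0}"]) auto

lemma supp_fin_smul [simp]: "supp_fin x \<Longrightarrow> supp_fin (smul c x)"
  unfolding supp_fin_def smul_def
  by (rule finite_subset[of _ "{w. x w \<noteq> 0}"]) auto

lemma supp_fin_fmult [simp]:
  assumes "supp_fin x" "supp_fin y"
  shows "supp_fin (fmult x y)"
proof -
  have "{w. fmult x y w \<noteq> 0} \<subseteq> (\<lambda>(a, b). a @ b) ` ({w. x w \<noteq> 0} \<times> {w. y w \<noteq> 0})"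
  proof
    fix w assume "w \<in> {w. fmult x y w \<noteq> 0}"
    then obtain n where "x (take n w) * y (drop n w) \<noteq> 0"
      unfolding fmult_def by (auto elim: sum.not_neutral_contains_not_neutral)
    then show "w \<in> (\<lambda>(a, b). a @ b) ` ({w. x w \<noteq> 0} \<times> {w. y w \<noteq> 0})"
      by (auto intro!: image_eqI[of _ _ "(take n w, drop n w)"])
  qed
  then show ?thesis
    using assms unfolding supp_fin_def by (auto intro: finite_subset)
qed

section \<open>Functionals respecting the commutation relations\<close>

definition fin_linear :: "(('a list \<Rightarrow> K) \<Rightarrow> K) \<Rightarrow> bool" where
  "fin_linear \<Phi> \<longleftrightarrow>
     (\<forall>x y. supp_fin x \<longrightarrow> supp_fin y \<longrightarrow> \<Phi> (x + y) = \<Phi> x + \<Phi> y) \<and>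
     (\<forall>c x. supp_fin x \<longrightarrow> \<Phi> (smul c x) = c * \<Phi> x)"

definition respects_relations ::
    "('i \<Rightarrow> 'i \<Rightarrow> int) \<Rightarrow> ('i \<Rightarrow> nat) \<Rightarrow> ((('i \<times> int) list \<Rightarrow> K) \<Rightarrow> K) \<Rightarrow> bool" where
  "respects_relations C d \<Phi> \<longleftrightarrow> fin_linear \<Phi> \<and>
    (\<forall>A R i j m p. p > m + 1 \<longrightarrow> \<Phi> (mono (A @ [(i, m), (j, p)] @ R)) =
        qi d i (sgn_pow (p - m + 1) * C i j) * \<Phi> (mono (A @ [(j, p), (i, m)] @ R))) \<and>
    (\<forall>A R i j p. \<Phi> (mono (A @ [(i, p), (j, p + 1)] @ R)) =
        qi d i (C i j) * \<Phi> (mono (A @ [(j, p + 1), (i, p)] @ R)) +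
        (if i = j then (1 - qi d i 2) * \<Phi> (mono (A @ R)) else 0))"

lemma fin_linear_add: "fin_linear \<Phi> \<Longrightarrow> supp_fin x \<Longrightarrow> supp_fin y \<Longrightarrow> \<Phi> (x + y) = \<Phi> x + \<Phi> y"
  unfolding fin_linear_def by blast

lemma fin_linear_smul: "fin_linear \<Phi> \<Longrightarrow> supp_fin x \<Longrightarrow> \<Phi> (smul c x) = c * \<Phi> x"
  unfolding fin_linear_def by blast

lemma fin_linear_zero: "fin_linear \<Phi> \<Longrightarrow> \<Phi> (\<lambda>_. 0) = 0"
  using fin_linear_smul[of \<Phi> "\<lambda>_. 0" 0] by (simp add: smul_def)

lemma fin_linear_expand:
  assumes lin: "fin_linear \<Phi>" and y: "supp_fin y"
  shows "\<Phi> y = (\<Sum>w\<in>{w. y w \<noteq> 0}. y w * \<Phi> (mono w))"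
proof -
  have "\<forall>y. {w. y w \<noteq> 0} = S \<longrightarrow> \<Phi> y = (\<Sum>w\<in>S. y w * \<Phi> (mono w))" if "finite S" for S
    using that
  proof (induction S rule: finite_induct)
    case empty
    then show ?case using fin_linear_zero[OF lin] by (auto simp: fun_eq_iff)
  next
    case (insert w0 S)
    show ?case
    proof (intro allI impI)
      fix y :: "'a list \<Rightarrow> K" assume y: "{w. y w \<noteq> 0} = insert w0 S"
      define y' where "y' = y(w0 := 0)"
      have supp': "{w. y' w \<noteq> 0} = S" using y insert.hyps unfolding y'_def by auto
      then have "supp_fin y'" unfolding supp_fin_def using insert.hyps by simp
      moreover have "y = y' + smul (y w0) (mono w0)"
        by (auto simp: y'_def smul_def mono_def fun_eq_iff)
      ultimately have "\<Phi> y = \<Phi> y' + y w0 * \<Phi> (mono w0)"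
        by (metis fin_linear_add fin_linear_smul lin supp_fin_mono supp_fin_smul)
      also have "\<Phi> y' = (\<Sum>w\<in>S. y' w * \<Phi> (mono w))"
        using insert.IH supp' by blast
      also have "\<dots> = (\<Sum>w\<in>S. y w * \<Phi> (mono w))"
        using insert.hyps by (intro sum.cong) (auto simp: y'_def)
      finally show "\<Phi> y = (\<Sum>w\<in>insert w0 S. y w * \<Phi> (mono w))"
        using insert.hyps by (simp add: add.commute)
    qed
  qed
  then show ?thesis using y unfolding supp_fin_def by blast
qed

lemma respects_relations_linear: "respects_relations C d \<Phi> \<Longrightarrow> fin_linear \<Phi>"
  unfolding respects_relations_def by blast

lemma respects_relations_far:
  "respects_relations C d \<Phi> \<Longrightarrow> p > m + 1 \<Longrightarrow> \<Phi> (mono (A @ [(i, m), (j, p)] @ R)) =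
     qi d i (sgn_pow (p - m + 1) * C i j) * \<Phi> (mono (A @ [(j, p), (i, m)] @ R))"
  unfolding respects_relations_def by blast

lemma respects_relations_adjacent:
  "respects_relations C d \<Phi> \<Longrightarrow> \<Phi> (mono (A @ [(i, p), (j, p + 1)] @ R)) =
     qi d i (C i j) * \<Phi> (mono (A @ [(j, p + 1), (i, p)] @ R)) +
     (if i = j then (1 - qi d i 2) * \<Phi> (mono (A @ R)) else 0)"
  unfolding respects_relations_def by blast

lemma respects_relations_transfer:
  assumes "respects_relations C d \<Phi>" "fin_linear \<Psi>"
    and "\<And>w. \<Psi> (mono w) = c * \<Phi> (mono (u @ w @ v))"
  shows "respects_relations C d \<Psi>"
  using assms(2) respects_relations_far[OF assms(1), of _ _ "u @ _" _ _ "_ @ v"]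
    respects_relations_adjacent[OF assms(1), of "u @ _" _ _ _ "_ @ v"]
  unfolding respects_relations_def assms(3) by (simp add: algebra_simps)

lemma respects_relations_scale:
  "respects_relations C d \<Phi> \<Longrightarrow> respects_relations C d (\<lambda>x. c * \<Phi> x)"
  by (rule respects_relations_transfer[where u = "[]" and v = "[]"])
    (auto simp: fin_linear_def respects_relations_def algebra_simps)

lemma respects_relations_mult_left:
  "respects_relations C d \<Phi> \<Longrightarrow> respects_relations C d (\<lambda>x. \<Phi> (fmult (mono u) x))"
  by (rule respects_relations_transfer[where c = 1 and v = "[]"])
    (auto simp: fin_linear_def respects_relations_def fmult_add_right fmult_smul_right fmult_mono_mono)

lemma respects_relations_mult_right:
  "respects_relations C d \<Phi> \<Longrightarrow> respects_relations C d (\<lambda>x. \<Phi> (fmult x (mono v)))"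
  by (rule respects_relations_transfer[where c = 1 and u = "[]"])
    (auto simp: fin_linear_def respects_relations_def fmult_add_left fmult_smul_left fmult_mono_mono)

lemma relator_in_relideal:
  assumes "fmult (gen a) (gen b) - smul c (fmult (gen b) (gen a)) - z \<in> relators C d"
  shows "mono (A @ [a, b] @ R) - smul c (mono (A @ [b, a] @ R)) - fmult (mono A) (fmult z (mono R))
           \<in> relideal C d"
  using relideal.rel[OF assms, of A R]
  by (simp add: gen_def fmult_mono_mono fmult_diff_left fmult_diff_right
      fmult_smul_left fmult_smul_right)

lemma respects_relations_if_relideal:
  assumes lin: "fin_linear \<Phi>"
    and resp: "\<And>x x'. supp_fin x \<Longrightarrow> supp_fin x' \<Longrightarrow> x - x' \<in> relideal C d \<Longrightarrow> \<Phi> x = \<Phi> x'"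
  shows "respects_relations C d \<Phi>"
  unfolding respects_relations_def
proof (intro conjI allI impI lin)
  fix A R i j and m p :: int
  let ?c = "qi d i (sgn_pow (p - m + 1) * C i j)"
  assume "p > m + 1"
  then have "fmult (gen (i, m)) (gen (j, p)) - smul ?c (fmult (gen (j, p)) (gen (i, m))) - (\<lambda>_. 0)
               \<in> relators C d"
    unfolding relators_def by force
  from relator_in_relideal[OF this, of A R]
  have "\<Phi> (mono (A @ [(i, m), (j, p)] @ R)) = \<Phi> (smul ?c (mono (A @ [(j, p), (i, m)] @ R)))"
    by (intro resp) (simp_all add: fmult_def fun_diff_def)
  then show "\<Phi> (mono (A @ [(i, m), (j, p)] @ R)) = ?c * \<Phi> (mono (A @ [(j, p), (i, m)] @ R))"
    using fin_linear_smul[OF lin] by simp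
next
  fix A R i j and p :: int
  let ?z = "if i = j then smul (1 - qi d i 2) (mono []) else (\<lambda>_. 0)"
  let ?x' = "smul (qi d i (C i j)) (mono (A @ [(j, p + 1), (i, p)] @ R)) +
             (if i = j then smul (1 - qi d i 2) (mono (A @ R)) else (\<lambda>_. 0))"
  have "fmult (gen (i, p)) (gen (j, p + 1)) - smul (qi d i (C i j)) (fmult (gen (j, p + 1)) (gen (i, p)))
          - ?z \<in> relators C d"
    unfolding relators_def by blast
  moreover have "fmult (mono A) (fmult ?z (mono R)) =
      (if i = j then smul (1 - qi d i 2) (mono (A @ R)) else (\<lambda>_. 0))"
    by (simp add: fmult_smul_left fmult_smul_right fmult_mono_mono)
  ultimately have "mono (A @ [(i, p), (j, p + 1)] @ R) - ?x' \<in> relideal C d"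
    using relator_in_relideal[of "(i, p)" "(j, p + 1)" _ ?z C d A R] by (simp add: diff_diff_eq)
  then have "\<Phi> (mono (A @ [(i, p), (j, p + 1)] @ R)) = \<Phi> ?x'"
    by (intro resp) auto
  then show "\<Phi> (mono (A @ [(i, p), (j, p + 1)] @ R)) =
      qi d i (C i j) * \<Phi> (mono (A @ [(j, p + 1), (i, p)] @ R)) +
      (if i = j then (1 - qi d i 2) * \<Phi> (mono (A @ R)) else 0)"
    by (simp add: fin_linear_add[OF lin] fin_linear_smul[OF lin] fin_linear_zero[OF lin])
qed

lemma bosonic_form_linear_left: "bosonic_form C d B \<Longrightarrow> supp_fin v \<Longrightarrow> fin_linear (\<lambda>x. B x v)"
  unfolding fin_linear_def bosonic_form_def by simp

lemma bosonic_form_linear_right: "bosonic_form C d B \<Longrightarrow> supp_fin v \<Longrightarrow> fin_linear (\<lambda>x. B v x)"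
  unfolding fin_linear_def bosonic_form_def by simp

lemma bosonic_form_respects_left:
  "bosonic_form C d B \<Longrightarrow> supp_fin v \<Longrightarrow> respects_relations C d (\<lambda>x. B x v)"
  by (rule respects_relations_if_relideal[OF bosonic_form_linear_left]) (auto simp: bosonic_form_def)

lemma bosonic_form_respects_right:
  "bosonic_form C d B \<Longrightarrow> supp_fin v \<Longrightarrow> respects_relations C d (\<lambda>x. B v x)"
  by (rule respects_relations_if_relideal[OF bosonic_form_linear_right]) (auto simp: bosonic_form_def)

lemma bosonic_form_sym: "bosonic_form C d B \<Longrightarrow> supp_fin x \<Longrightarrow> supp_fin y \<Longrightarrow> B x y = B y x"
  unfolding bosonic_form_def by blast

section \<open>Straightening to ordered monomials\<close>

text \<open>The shape of the products \<open>x\<^sub>b \<cdots> x\<^sub>a\<close> on which the form is given.\<close>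
definition ordered_word :: "('a \<times> int) list \<Rightarrow> bool" where
  "ordered_word w \<longleftrightarrow> sorted_wrt (\<lambda>x y. snd y \<le> snd x) w"

definition ordered_of_weight :: "('i \<Rightarrow> int) \<Rightarrow> (('i \<times> int) list \<Rightarrow> K) \<Rightarrow> bool" where
  "ordered_of_weight \<beta> y \<longleftrightarrow> supp_fin y \<and> (\<forall>w. y w \<noteq> 0 \<longrightarrow> ordered_word w \<and> wtw w = \<beta>)"

fun inversions :: "('a \<times> int) list \<Rightarrow> nat" where
  "inversions [] = 0"
| "inversions (l # w) = length (filter (\<lambda>l'. snd l < snd l') w) + inversions w"

lemma inversions_swap:
  "snd l1 < snd l2 \<Longrightarrow> inversions (A @ [l2, l1] @ R) < inversions (A @ [l1, l2] @ R)"
  by (induction A) auto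

lemma not_ordered_word_adjacent:
  assumes "\<not> ordered_word w"
  obtains A l1 l2 R where "w = A @ [l1, l2] @ R" "snd l1 < snd l2"
proof -
  have "transp (\<lambda>x y :: ('a \<times> int). snd y \<le> snd x)"
    by (auto simp: transp_def)
  then obtain s where s: "Suc s < length w" "snd (w ! s) < snd (w ! Suc s)"
    using assms unfolding ordered_word_def by (auto simp: sorted_wrt_iff_nth_Suc_transp not_le)
  then have "w = take s w @ [w ! s, w ! Suc s] @ drop (Suc (Suc s)) w"
    by (metis Cons_nth_drop_Suc Suc_lessD append_Cons append_Nil append_take_drop_id)
  then show ?thesis using that s(2) by blast
qed

lemma wtw_append: "wtw (u @ v) = (\<lambda>j. wtw u j + wtw v j)"
  unfolding wtw_def by (simp add: fun_eq_iff)

lemma wtw_Cons: "wtw (l # v) = (\<lambda>j. (if fst l = j then sgn_pow (snd l + 1) else 0) + wtw v j)"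
  unfolding wtw_def by (cases l) (simp add: fun_eq_iff)

lemma wtw_swap: "wtw (A @ [l2, l1] @ R) = wtw (A @ [l1, l2] @ R)"
  by (simp add: wtw_append wtw_Cons fun_eq_iff)

lemma wtw_cancel: "wtw (A @ [(i, m), (i, m + 1)] @ R) = wtw (A @ R)"
  using sgn_pow_succ[of "m + 1"] by (simp add: wtw_append wtw_Cons fun_eq_iff)

lemma ordered_of_weight_smul:
  assumes "ordered_of_weight \<beta>' y" "c \<noteq> 0 \<Longrightarrow> \<beta>' = \<beta>"
  shows "ordered_of_weight \<beta> (smul c y)"
proof -
  have "supp_fin (smul c y)" using assms(1) by (simp add: ordered_of_weight_def)
  then show ?thesis using assms unfolding ordered_of_weight_def by (auto simp: smul_def)
qed

lemma ordered_of_weight_add: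
  "ordered_of_weight \<beta> y \<Longrightarrow> ordered_of_weight \<beta> z \<Longrightarrow> ordered_of_weight \<beta> (y + z)"
  unfolding ordered_of_weight_def by (metis add.left_neutral plus_fun_apply supp_fin_add)

text \<open>One rewriting step: an adjacent inversion is removed at the cost of a word with the two
  letters swapped and, for \<open>f\<^sub>i\<^sub>,\<^sub>m f\<^sub>i\<^sub>,\<^sub>m\<^sub>+\<^sub>1\<close>, a shorter word of the same weight.\<close>
lemma respects_relations_unordered:
  assumes "\<not> ordered_word w"
  obtains w1 w2 c c' where
    "\<And>\<Phi>. respects_relations C d \<Phi> \<Longrightarrow> \<Phi> (mono w) = c * \<Phi> (mono w1) + c' * \<Phi> (mono w2)"
    "(w1, w) \<in> measures [length, inversions]" "(w2, w) \<in> measures [length, inversions]"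
    "wtw w1 = wtw w" "c' \<noteq> 0 \<Longrightarrow> wtw w2 = wtw w"
proof -
  obtain A l1 l2 R where "w = A @ [l1, l2] @ R" "snd l1 < snd l2"
    using not_ordered_word_adjacent[OF assms] .
  moreover obtain i m j p where "l1 = (i, m)" "l2 = (j, p)" by fastforce
  ultimately have w: "w = A @ [(i, m), (j, p)] @ R" and "m < p" by simp_all
  let ?w1 = "A @ [(j, p), (i, m)] @ R" and ?w2 = "A @ R"
  have measures: "(?w1, w) \<in> measures [length, inversions]" "(?w2, w) \<in> measures [length, inversions]"
    using inversions_swap[of "(i, m)" "(j, p)" A R] \<open>m < p\<close> w by simp_all
  have "wtw ?w1 = wtw w" using wtw_swap[of A "(j, p)" "(i, m)" R] w by simp
  show ?thesis
  proof (cases "p > m + 1")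
    case True
    show ?thesis
    proof (rule that[of "qi d i (sgn_pow (p - m + 1) * C i j)" ?w1 0 ?w2])
      fix \<Phi> assume "respects_relations C d \<Phi>"
      from respects_relations_far[OF this True, of A i j R] w
      show "\<Phi> (mono w) = qi d i (sgn_pow (p - m + 1) * C i j) * \<Phi> (mono ?w1) + 0 * \<Phi> (mono ?w2)"
        by simp
    qed (use measures \<open>wtw ?w1 = wtw w\<close> in simp_all)
  next
    case False
    with \<open>m < p\<close> have p: "p = m + 1" by simp
    show ?thesis
    proof (rule that[of "qi d i (C i j)" ?w1 "if i = j then 1 - qi d i 2 else 0" ?w2])
      fix \<Phi> assume "respects_relations C d \<Phi>"
      from respects_relations_adjacent[OF this, of A i m j R] w p
      show "\<Phi> (mono w) = qi d i (C i j) * \<Phi> (mono ?w1) + (if i = j then 1 - qi d i 2 else 0) * \<Phi> (mono ?w2)"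
        by simp
    next
      assume "(if i = j then 1 - qi d i 2 else 0) \<noteq> 0"
      then have "i = j" by presburger
      then show "wtw ?w2 = wtw w"
        using w p wtw_cancel[of A i m R] by simp
    qed (use measures \<open>wtw ?w1 = wtw w\<close> in simp_all)
  qed
qed

lemma straightening:
  "\<exists>y. ordered_of_weight (wtw w) y \<and> (\<forall>\<Phi>. respects_relations C d \<Phi> \<longrightarrow> \<Phi> (mono w) = \<Phi> y)"
proof (induction w rule: wf_induct[OF wf_measures[of "[length, inversions]"]])
  case (1 w)
  show ?case
  proof (cases "ordered_word w")
    case True
    then have "ordered_of_weight (wtw w) (mono w)"
      unfolding ordered_of_weight_def by (simp add: mono_apply)
    then show ?thesis by blast
  next
    case False
    then obtain w1 w2 c c' where
      step: "\<And>\<Phi>. respects_relations C d \<Phi> \<Longrightarrow> \<Phi> (mono w) = c * \<Phi> (mono w1) + c' * \<Phi> (mono w2)"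
      and smaller: "(w1, w) \<in> measures [length, inversions]" "(w2, w) \<in> measures [length, inversions]"
      and weight: "wtw w1 = wtw w" "c' \<noteq> 0 \<Longrightarrow> wtw w2 = wtw w"
      by (rule respects_relations_unordered[where C = C and d = d]) blast
    obtain y1 where y1: "ordered_of_weight (wtw w1) y1"
        "\<forall>\<Phi>. respects_relations C d \<Phi> \<longrightarrow> \<Phi> (mono w1) = \<Phi> y1"
      using "1" smaller(1) by blast
    obtain y2 where y2: "ordered_of_weight (wtw w2) y2"
        "\<forall>\<Phi>. respects_relations C d \<Phi> \<longrightarrow> \<Phi> (mono w2) = \<Phi> y2"
      using "1" smaller(2) by blast
    have "ordered_of_weight (wtw w) (smul c y1)"
      using ordered_of_weight_smul[OF y1(1)] weight(1) by blast
    moreover have "ordered_of_weight (wtw w) (smul c' y2)"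
      using ordered_of_weight_smul[OF y2(1)] weight(2) by blast
    ultimately have "ordered_of_weight (wtw w) (smul c y1 + smul c' y2)"
      by (rule ordered_of_weight_add)
    moreover have "\<Phi> (mono w) = \<Phi> (smul c y1 + smul c' y2)" if \<Phi>: "respects_relations C d \<Phi>" for \<Phi>
    proof -
      have "supp_fin y1" "supp_fin y2"
        using y1(1) y2(1) by (simp_all add: ordered_of_weight_def)
      then show ?thesis
        using step[OF \<Phi>] y1(2)[rule_format, OF \<Phi>] y2(2)[rule_format, OF \<Phi>]
          respects_relations_linear[OF \<Phi>]
        by (simp add: fin_linear_add fin_linear_smul)
    qed
    ultimately show ?thesis by blast
  qed
qed

lemma respects_relations_eq_if_eq_ordered:
  assumes "respects_relations C d \<Phi>" "respects_relations C d \<Psi>"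
    and ordered: "\<And>x. ordered_word x \<Longrightarrow> P (wtw x) \<Longrightarrow> \<Phi> (mono x) = \<Psi> (mono x)"
    and u: "supp_fin u" "\<And>w. u w \<noteq> 0 \<Longrightarrow> P (wtw w)"
  shows "\<Phi> u = \<Psi> u"
proof -
  note lin = assms(1,2)[THEN respects_relations_linear]
  have mono_eq: "\<Phi> (mono w) = \<Psi> (mono w)" if "P (wtw w)" for w
  proof -
    obtain y where y: "ordered_of_weight (wtw w) y"
        "\<forall>\<Phi>. respects_relations C d \<Phi> \<longrightarrow> \<Phi> (mono w) = \<Phi> y"
      using straightening by blast
    have "supp_fin y" using y(1) by (simp add: ordered_of_weight_def)
    have "\<Phi> (mono w) = \<Phi> y" using y(2) assms(1) by blast
    also have "\<dots> = (\<Sum>w'\<in>{w'. y w' \<noteq> 0}. y w' * \<Phi> (mono w'))"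
      by (rule fin_linear_expand[OF lin(1) \<open>supp_fin y\<close>])
    also have "\<dots> = (\<Sum>w'\<in>{w'. y w' \<noteq> 0}. y w' * \<Psi> (mono w'))"
      using y(1) that ordered by (intro sum.cong) (auto simp: ordered_of_weight_def)
    also have "\<dots> = \<Psi> y"
      by (rule fin_linear_expand[OF lin(2) \<open>supp_fin y\<close>, symmetric])
    also have "\<dots> = \<Psi> (mono w)" by (rule y(2)[rule_format, OF assms(2), symmetric])
    finally show ?thesis .
  qed
  have "\<Phi> u = (\<Sum>w\<in>{w. u w \<noteq> 0}. u w * \<Phi> (mono w))"
    by (rule fin_linear_expand[OF lin(1) u(1)])
  also have "\<dots> = (\<Sum>w\<in>{w. u w \<noteq> 0}. u w * \<Psi> (mono w))"
    using mono_eq u(2) by (intro sum.cong) auto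
  also have "\<dots> = \<Psi> u"
    by (rule fin_linear_expand[OF lin(2) u(1), symmetric])
  finally show ?thesis .
qed

lemma respects_relations2_eq_if_eq_ordered:
  fixes \<Phi> \<Psi> :: "(('i \<times> int) list \<Rightarrow> K) \<Rightarrow> (('i \<times> int) list \<Rightarrow> K) \<Rightarrow> K"
  assumes "\<And>v. supp_fin v \<Longrightarrow> respects_relations C d (\<lambda>x. \<Phi> x v)"
    and "\<And>v. supp_fin v \<Longrightarrow> respects_relations C d (\<lambda>x. \<Psi> x v)"
    and "\<And>x. respects_relations C d (\<lambda>v. \<Phi> (mono x) v)"
    and "\<And>x. respects_relations C d (\<lambda>v. \<Psi> (mono x) v)"
    and "\<And>x z. ordered_word x \<Longrightarrow> ordered_word z \<Longrightarrow> P (wtw x) \<Longrightarrow>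
           \<Phi> (mono x) (mono z) = \<Psi> (mono x) (mono z)"
    and "supp_fin u" "\<And>w. u w \<noteq> 0 \<Longrightarrow> P (wtw w)" "supp_fin v"
  shows "\<Phi> u v = \<Psi> u v"
proof (rule respects_relations_eq_if_eq_ordered[where P = P, OF assms(1,2)[OF assms(8)] _ assms(6,7)])
  fix x assume x: "ordered_word x" "P (wtw x)"
  show "\<Phi> (mono x) v = \<Psi> (mono x) v"
  proof (rule respects_relations_eq_if_eq_ordered[where P = "\<lambda>_. True", OF assms(3,4) _ assms(8)])
    fix z :: "('i \<times> int) list" assume "ordered_word z"
    then show "\<Phi> (mono x) (mono z) = \<Psi> (mono x) (mono z)"
      using assms(5) x by blast
  qed simp
qed

section \<open>Skew derivations of Lusztig's form\<close>

text \<open>For \<open>sg = -1\<close> they describe the adjoints of left and right multiplication by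
  \<open>f\<^sub>i\<close> for Lusztig's form, and for \<open>sg = 1\<close> the correction terms created by the q-boson
  relation.\<close>
fun qder_left :: "('i \<Rightarrow> 'i \<Rightarrow> int) \<Rightarrow> ('i \<Rightarrow> nat) \<Rightarrow> 'i \<Rightarrow> int \<Rightarrow> ('i list \<Rightarrow> K) \<Rightarrow> 'i list \<Rightarrow> K"
  where
  "qder_left C d i sg F [] = 0"
| "qder_left C d i sg F (j # v) =
     (if j = i then F v else 0) + qi d i (sg * C i j) * qder_left C d i sg (\<lambda>w. F (j # w)) v"

fun qder_right :: "('i \<Rightarrow> 'i \<Rightarrow> int) \<Rightarrow> ('i \<Rightarrow> nat) \<Rightarrow> 'i \<Rightarrow> int \<Rightarrow> ('i list \<Rightarrow> K) \<Rightarrow> 'i list \<Rightarrow> K"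
  where
  "qder_right C d i sg F [] = 0"
| "qder_right C d i sg F (j # v) =
     (if j = i then qi d i (sg * sum_list (map (C i) v)) * F v else 0) +
     qder_right C d i sg (\<lambda>w. F (j # w)) v"

lemma Lw_Cons_qder_left: "Lw C d (i # u) v = inverse (1 - qi d i 2) * qder_left C d i (-1) (Lw C d u) v"
proof -
  have "(\<Sum>s\<in>{..<length v}. if v ! s = i
           then qi d i (- (\<Sum>t<s. C i (v ! t))) * F (take s v @ drop (Suc s) v) else 0)
        = qder_left C d i (-1) F v" for F
  proof (induction v arbitrary: F)
    case (Cons j v)
    have "(\<Sum>s<length v. if v ! s = i
             then qi d i (- (C i j + (\<Sum>t<s. C i (v ! t)))) * F (j # take s v @ drop (Suc s) v) else 0)
          = qi d i (- C i j) * qder_left C d i (-1) (\<lambda>w. F (j # w)) v"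
      unfolding Cons.IH[symmetric] sum_distrib_left
      by (intro sum.cong) (auto simp: qi_add[symmetric])
    moreover have "(\<Sum>s<length (j # v). if (j # v) ! s = i
             then qi d i (- (\<Sum>t<s. C i ((j # v) ! t))) * F (take s (j # v) @ drop (Suc s) (j # v))
             else 0) =
        (if j = i then F v else 0) + (\<Sum>s<length v. if v ! s = i
             then qi d i (- (C i j + (\<Sum>t<s. C i (v ! t)))) * F (j # take s v @ drop (Suc s) v) else 0)"
      by (simp only: sum.lessThan_Suc_shift length_Cons nth_Cons_0 nth_Cons_Suc take_Suc_Cons
          drop_Suc_Cons append_Cons) simp
    ultimately show ?case by simp
  qed simp
  then show ?thesis by simp
qed

lemma qder_left_scale: "qder_left C d i sg (\<lambda>w. c * F w) v = c * qder_left C d i sg F v"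
  by (induction v arbitrary: F) (auto simp: algebra_simps)

lemma qder_right_scale: "qder_right C d i sg (\<lambda>w. c * F w) v = c * qder_right C d i sg F v"
  by (induction v arbitrary: F) (auto simp: algebra_simps)

lemma qder_left_scale_right: "qder_left C d i sg (\<lambda>w. F w * c) v = qder_left C d i sg F v * c"
  using qder_left_scale[of C d i sg c F v] by (simp add: mult.commute)

lemma qder_right_scale_right: "qder_right C d i sg (\<lambda>w. F w * c) v = qder_right C d i sg F v * c"
  using qder_right_scale[of C d i sg c F v] by (simp add: mult.commute)

lemma qder_left_add:
  "qder_left C d i sg (\<lambda>w. F w + G w) v = qder_left C d i sg F v + qder_left C d i sg G v"
  by (induction v arbitrary: F G) (auto simp: algebra_simps)

lemma qder_right_add:
  "qder_right C d i sg (\<lambda>w. F w + G w) v = qder_right C d i sg F v + qder_right C d i sg G v"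
  by (induction v arbitrary: F G) (auto simp: algebra_simps)

lemma qder_left_zero [simp]: "qder_left C d i sg (\<lambda>w. 0) v = 0"
  by (induction v) auto

lemma qder_right_zero [simp]: "qder_right C d i sg (\<lambda>w. 0) v = 0"
  by (induction v) auto

lemma qder_left_cong:
  "(\<And>w. mset (i # w) = mset v \<Longrightarrow> F w = G w) \<Longrightarrow> qder_left C d i sg F v = qder_left C d i sg G v"
proof (induction v arbitrary: F G)
  case (Cons j v)
  have "qder_left C d i sg (\<lambda>w. F (j # w)) v = qder_left C d i sg (\<lambda>w. G (j # w)) v"
    by (rule Cons.IH) (use Cons.prems in \<open>auto simp: add_mset_commute\<close>)
  then show ?case using Cons.prems by simp
qed simp

lemma qder_right_cong:
  "(\<And>w. mset (i # w) = mset v \<Longrightarrow> F w = G w) \<Longrightarrow> qder_right C d i sg F v = qder_right C d i sg G v"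
proof (induction v arbitrary: F G)
  case (Cons j v)
  have "qder_right C d i sg (\<lambda>w. F (j # w)) v = qder_right C d i sg (\<lambda>w. G (j # w)) v"
    by (rule Cons.IH) (use Cons.prems in \<open>auto simp: add_mset_commute\<close>)
  then show ?case using Cons.prems by simp
qed simp

lemma qder_left_nonzero:
  "qder_left C d i sg F v \<noteq> 0 \<Longrightarrow> \<exists>w. mset (i # w) = mset v \<and> F w \<noteq> 0"
  by (metis qder_left_cong qder_left_zero)

lemma qder_right_nonzero:
  "qder_right C d i sg F v \<noteq> 0 \<Longrightarrow> \<exists>w. mset (i # w) = mset v \<and> F w \<noteq> 0"
  by (metis qder_right_cong qder_right_zero)

lemma Lw_nonzero_mset: "Lw C d u v \<noteq> 0 \<Longrightarrow> mset u = mset v"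
proof (induction u arbitrary: v)
  case (Cons i u)
  have "qder_left C d i (-1) (Lw C d u) v \<noteq> 0"
    using Cons.prems unfolding Lw_Cons_qder_left by simp
  then obtain w where "mset (i # w) = mset v" "Lw C d u w \<noteq> 0"
    by (blast dest: qder_left_nonzero)
  with Cons.IH[of w] show ?case by simp
qed (simp split: if_splits)

lemma sum_list_map_mset_eq:
  fixes f :: "'a \<Rightarrow> 'b::comm_monoid_add"
  assumes "mset a = mset b"
  shows "sum_list (map f a) = sum_list (map f b)"
proof -
  have "mset (map f a) = mset (map f b)" using assms by simp
  then show ?thesis by (metis sum_mset_sum_list)
qed

lemma qder_left_right:
  assumes "C i i = 2"
  shows "qder_left C d i sg F v = qi d i (sg * (sum_list (map (C i) v) - 2)) * qder_right C d i (- sg) F v"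
proof (induction v arbitrary: F)
  case (Cons j v)
  have "j = i \<Longrightarrow> qi d i (sg * (sum_list (map (C i) (j # v)) - 2)) * qi d i (- sg * sum_list (map (C i) v)) = 1"
    using assms by (simp add: qi_add[symmetric] algebra_simps)
  moreover have "qi d i (sg * C i j) * qi d i (sg * (sum_list (map (C i) v) - 2)) =
      qi d i (sg * (sum_list (map (C i) (j # v)) - 2))"
    by (simp add: qi_add[symmetric] algebra_simps)
  ultimately show ?case
    using Cons.IH[of "\<lambda>w. F (j # w)"]
    by (simp add: algebra_simps) (metis (no_types, lifting) mult.assoc mult.commute mult_1)
qed simp

lemma qder_left_qi_sum:
  "qder_left C d j sg (\<lambda>w. qi d i (sg * sum_list (map (C i) w)) * G w) v
   = qi d i (sg * (sum_list (map (C i) v) - C i j)) * qder_left C d j sg G v"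
proof -
  have "qder_left C d j sg (\<lambda>w. qi d i (sg * sum_list (map (C i) w)) * G w) v
      = qder_left C d j sg (\<lambda>w. qi d i (sg * (sum_list (map (C i) v) - C i j)) * G w) v"
  proof (rule qder_left_cong)
    fix w assume "mset (j # w) = mset v"
    then have "sum_list (map (C i) (j # w)) = sum_list (map (C i) v)"
      by (rule sum_list_map_mset_eq)
    then have "sum_list (map (C i) w) = sum_list (map (C i) v) - C i j" by simp
    then show "qi d i (sg * sum_list (map (C i) w)) * G w =
        qi d i (sg * (sum_list (map (C i) v) - C i j)) * G w"
      by simp
  qed
  then show ?thesis by (simp add: qder_left_scale)
qed

text \<open>The symmetry \<open>d\<^sub>i c\<^sub>i\<^sub>j = d\<^sub>j c\<^sub>j\<^sub>i\<close> is what makes the left and right skew derivations commute.\<close>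
lemma qder_left_right_commute:
  assumes sym: "\<And>a b. int (d a) * C a b = int (d b) * C b a"
  shows "qder_left C d j sg (qder_right C d i sg G) v = qder_right C d i sg (qder_left C d j sg G) v"
proof (induction v arbitrary: G)
  case (Cons a v)
  have left: "qder_left C d j sg (\<lambda>w. qder_right C d i sg G (a # w)) v =
      (if a = i then qi d i (sg * (sum_list (map (C i) v) - C i j)) * qder_left C d j sg G v else 0) +
      qder_right C d i sg (qder_left C d j sg (\<lambda>w'. G (a # w'))) v"
  proof -
    have "qder_left C d j sg (\<lambda>w. qder_right C d i sg G (a # w)) v =
        qder_left C d j sg (\<lambda>w. if a = i then qi d i (sg * sum_list (map (C i) w)) * G w else 0) v +
        qder_left C d j sg (qder_right C d i sg (\<lambda>w'. G (a # w'))) v"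
      by (simp add: qder_left_add[symmetric])
    then show ?thesis by (cases "a = i") (simp_all add: qder_left_qi_sum Cons.IH)
  qed
  have right: "qder_right C d i sg (\<lambda>w. qder_left C d j sg G (a # w)) v =
      (if a = j then qder_right C d i sg G v else 0) +
      qi d j (sg * C j a) * qder_right C d i sg (qder_left C d j sg (\<lambda>w'. G (a # w'))) v"
  proof -
    have "qder_right C d i sg (\<lambda>w. qder_left C d j sg G (a # w)) v =
        qder_right C d i sg (\<lambda>w. if a = j then G w else 0) v +
        qder_right C d i sg (\<lambda>w. qi d j (sg * C j a) * qder_left C d j sg (\<lambda>w'. G (a # w')) w) v"
      by (simp add: qder_right_add[symmetric])
    then show ?thesis by (cases "a = j") (simp_all add: qder_right_scale)
  qed
  have "a = i \<Longrightarrow> qi d j (sg * C j a) * qi d i (sg * (sum_list (map (C i) v) - C i j)) =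
      qi d i (sg * sum_list (map (C i) v))"
    using qi_symmetrized[of d j C i sg] sym by (simp add: qi_add[symmetric] algebra_simps)
  then show ?case
    using left right by (cases "a = i"; cases "a = j") (simp_all add: algebra_simps)
qed simp

lemma Lw_snoc_qder_right:
  assumes sym: "\<And>a b. int (d a) * C a b = int (d b) * C b a"
  shows "Lw C d (u @ [i]) v = inverse (1 - qi d i 2) * qder_right C d i (-1) (Lw C d u) v"
proof (induction u arbitrary: v)
  case Nil
  have "qder_left C d i (-1) (Lw C d []) v = qder_right C d i (-1) (Lw C d []) v"
    by (cases v) simp_all
  then show ?case by (simp only: append_Nil Lw_Cons_qder_left)
next
  case (Cons j u)
  have "Lw C d (u @ [i]) = (\<lambda>w. inverse (1 - qi d i 2) * qder_right C d i (-1) (Lw C d u) w)"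
    using Cons.IH by blast
  then have "Lw C d ((j # u) @ [i]) v =
      inverse (1 - qi d j 2) * (inverse (1 - qi d i 2) *
        qder_left C d j (-1) (qder_right C d i (-1) (Lw C d u)) v)"
    by (simp only: append_Cons Lw_Cons_qder_left qder_left_scale)
  also have "\<dots> = inverse (1 - qi d i 2) *
        qder_right C d i (-1) (\<lambda>w. inverse (1 - qi d j 2) * qder_left C d j (-1) (Lw C d u) w) v"
    by (simp add: qder_left_right_commute[OF sym] qder_right_scale)
  finally show ?case by (simp only: Lw_Cons_qder_left)
qed

section \<open>The form on ordered monomials\<close>

definition level_block :: "int \<Rightarrow> ('a \<times> int) list \<Rightarrow> ('a \<times> int) list" where
  "level_block m w = filter (\<lambda>l. snd l = m) w"

definition at_level :: "int \<Rightarrow> 'a list \<Rightarrow> ('a \<times> int) list" where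
  "at_level m a = map (\<lambda>j. (j, m)) a"

text \<open>The factor \<open>\<kappa>\<^bsup>|wt x\<^sub>k| + |wt y\<^sub>k|\<^esup> (x\<^sub>k, y\<^sub>k)\<^sub>L\<close> of a single level \<open>k\<close>, for monomials
  \<open>x\<^sub>k, y\<^sub>k\<close> given by their lists of colours.\<close>
definition level_form :: "('i \<Rightarrow> 'i \<Rightarrow> int) \<Rightarrow> ('i::finite \<Rightarrow> nat) \<Rightarrow> 'i list \<Rightarrow> 'i list \<Rightarrow> K" where
  "level_form C d a b = kappa d (count (mset a + mset b)) * Lw C d a b"

definition level_factor ::
    "('i \<Rightarrow> 'i \<Rightarrow> int) \<Rightarrow> ('i::finite \<Rightarrow> nat) \<Rightarrow> int \<Rightarrow> ('i \<times> int) list \<Rightarrow> ('i \<times> int) list \<Rightarrow> K"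
  where "level_factor C d m x z = level_form C d (map fst (level_block m x)) (map fst (level_block m z))"

lemma ordered_word_append:
  "ordered_word (x @ y) \<longleftrightarrow> ordered_word x \<and> ordered_word y \<and> (\<forall>l\<in>set x. \<forall>l'\<in>set y. snd l' \<le> snd l)"
  unfolding ordered_word_def by (simp add: sorted_wrt_append)

lemma ordered_word_filter: "ordered_word x \<Longrightarrow> ordered_word (filter P x)"
  unfolding ordered_word_def by (rule sorted_wrt_filter)

lemma ordered_word_filter_disj:
  assumes "ordered_word x" "\<And>l l'. P l \<Longrightarrow> Q l' \<Longrightarrow> snd l' < snd l" "\<And>l. \<not> (P l \<and> Q l)"
  shows "filter (\<lambda>l. P l \<or> Q l) x = filter P x @ filter Q x"
  using assms(1)
proof (induction x)
  case (Cons y x)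
  then have IH: "filter (\<lambda>l. P l \<or> Q l) x = filter P x @ filter Q x"
    and le: "\<forall>l\<in>set x. snd l \<le> snd y"
    by (auto simp: ordered_word_def)
  have "filter P x = []" if "Q y"
    using le assms(2)[OF _ that] by (force simp: filter_empty_conv)
  then show ?case using IH assms(3)[of y] by auto
qed simp

lemma pd_level_blocks:
  assumes "ordered_word x"
  shows "pd (\<lambda>m. mono (level_block m x)) a n =
         mono (filter (\<lambda>l. a \<le> snd l \<and> snd l \<le> a + int n) x)"
proof (induction n)
  case 0
  have "filter (\<lambda>l. a \<le> snd l \<and> snd l \<le> a) x = level_block a x"
    unfolding level_block_def by (rule filter_cong) auto
  then show ?case by simp
next
  case (Suc n)
  have "filter (\<lambda>l. a \<le> snd l \<and> snd l \<le> a + int (Suc n)) x =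
        filter (\<lambda>l. snd l = a + int (Suc n) \<or> (a \<le> snd l \<and> snd l \<le> a + int n)) x"
    by (rule filter_cong) auto
  also have "\<dots> = level_block (a + int (Suc n)) x @ filter (\<lambda>l. a \<le> snd l \<and> snd l \<le> a + int n) x"
    unfolding level_block_def by (rule ordered_word_filter_disj[OF assms]) auto
  finally show ?case using Suc by (simp add: fmult_mono_mono)
qed

lemma count_mset_map_fst: "count (mset (map fst ys)) j = length (filter (\<lambda>l. fst l = j) ys)"
  by (induction ys) auto

lemma count_level_block: "count (mset H) (j, m) = count (mset (map fst (level_block m H))) j"
  unfolding count_mset_map_fst level_block_def by (induction H) auto

lemma level_block_Nil: "(\<forall>l\<in>set x. snd l \<noteq> m) \<Longrightarrow> level_block m x = []"
  unfolding level_block_def by (simp add: filter_empty_conv)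

lemma level_block_append: "level_block m (x @ y) = level_block m x @ level_block m y"
  unfolding level_block_def by simp

lemma level_block_Ak_hom:
  "mono (level_block m x) \<in> Ak_hom m (count (mset (map fst (level_block m x))))"
  unfolding Ak_hom_def count_mset_map_fst by (auto simp: mono_apply level_block_def)

lemma LusF_mono: "LusF C d (mono u) (mono v) = Lw C d (map fst u) (map fst v)"
proof -
  have "{w. mono u w \<noteq> 0} = {u}" for u by (auto simp: mono_apply)
  then show ?thesis unfolding LusF_def by (simp add: mono_apply)
qed

lemma bosonic_form_pd:
  "bosonic_form C d B \<Longrightarrow>
   (\<forall>k\<in>{a..a + int n}. X k \<in> Ak_hom k (gx k) \<and> Y k \<in> Ak_hom k (gy k)) \<Longrightarrow>
   B (pd X a n) (pd Y a n) =
     (\<Prod>k\<in>{a..a + int n}. kappa d (\<lambda>j. gx k j + gy k j) * LusF C d (X k) (Y k))"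
  unfolding bosonic_form_def by blast

lemma bosonic_form_ordered:
  assumes bf: "bosonic_form C d B" and x: "ordered_word x" and z: "ordered_word z"
    and S: "finite S" "snd ` set x \<union> snd ` set z \<subseteq> S"
  shows "B (mono x) (mono z) = (\<Prod>m\<in>S. level_factor C d m x z)"
proof -
  define a where "a = Min (insert 0 S)"
  define M where "M = Max (insert 0 S)"
  define n where "n = nat (M - a)"
  have "a \<le> 0" "0 \<le> M" and sub: "S \<subseteq> {a..M}"
    using S(1) unfolding a_def M_def by auto
  then have top: "a + int n = M"
    unfolding n_def by simp
  have pd: "pd (\<lambda>m. mono (level_block m y)) a n = mono y"
    if "ordered_word y" "snd ` set y \<subseteq> S" for y
  proof -
    have "\<forall>l\<in>set y. a \<le> snd l \<and> snd l \<le> a + int n"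
      using that(2) sub top by fastforce
    then show ?thesis using pd_level_blocks[OF that(1), of a n] by (simp add: filter_id_conv)
  qed
  have "B (mono x) (mono z) =
        B (pd (\<lambda>m. mono (level_block m x)) a n) (pd (\<lambda>m. mono (level_block m z)) a n)"
    using pd[OF x] pd[OF z] S(2) by simp
  also have "\<dots> = (\<Prod>m\<in>{a..a + int n}.
      kappa d (\<lambda>j. count (mset (map fst (level_block m x))) j + count (mset (map fst (level_block m z))) j)
      * LusF C d (mono (level_block m x)) (mono (level_block m z)))"
    by (rule bosonic_form_pd[OF bf]) (blast intro: level_block_Ak_hom)
  also have "\<dots> = (\<Prod>m\<in>{a..M}. level_factor C d m x z)"
    unfolding top LusF_mono level_factor_def level_form_def count_union[symmetric] ..
  also have "\<dots> = (\<Prod>m\<in>S. level_factor C d m x z)"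
  proof (intro prod.mono_neutral_right)
    show "\<forall>m\<in>{a..M} - S. level_factor C d m x z = 1"
    proof
      fix m assume "m \<in> {a..M} - S"
      then have "level_block m x = []" "level_block m z = []"
        using S(2) by (auto intro!: level_block_Nil)
      then show "level_factor C d m x z = 1"
        by (simp add: level_factor_def level_form_def)
    qed
  qed (use sub in auto)
  finally show ?thesis .
qed

lemma level_form_nonzero_mset:
  assumes "level_form C d a b \<noteq> 0"
  shows "mset a = mset b"
proof -
  have "Lw C d a b \<noteq> 0" using assms unfolding level_form_def by auto
  then show ?thesis by (rule Lw_nonzero_mset)
qed

lemma bosonic_form_ordered_nonzero_mset:
  assumes bf: "bosonic_form C d B" and x: "ordered_word x" and z: "ordered_word z"
    and nz: "B (mono x) (mono z) \<noteq> 0"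
  shows "mset x = mset z"
proof (rule multiset_eqI)
  fix l :: "'a \<times> int"
  obtain j m where l: "l = (j, m)" by fastforce
  define S where "S = snd ` set x \<union> snd ` set z"
  show "count (mset x) l = count (mset z) l"
  proof (cases "m \<in> S")
    case True
    have "B (mono x) (mono z) = (\<Prod>m\<in>S. level_factor C d m x z)"
      by (rule bosonic_form_ordered[OF bf x z]) (auto simp: S_def)
    then have "level_factor C d m x z \<noteq> 0" using nz True unfolding S_def by auto
    then have "mset (map fst (level_block m x)) = mset (map fst (level_block m z))"
      unfolding level_factor_def by (rule level_form_nonzero_mset)
    then show ?thesis unfolding l count_level_block by (rule arg_cong)
  next
    case False
    then have "level_block m x = []" "level_block m z = []"
      unfolding S_def by (auto intro!: level_block_Nil)
    then show ?thesis unfolding l count_level_block by simp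
  qed
qed

lemma wtw_mset: "mset x = mset z \<Longrightarrow> wtw x = wtw z"
  unfolding wtw_def by (rule ext, rule sum_list_map_mset_eq)

lemma bosonic_form_nonzero_wtw:
  assumes bf: "bosonic_form C d B" and z: "ordered_word z"
    and nz: "B (mono w) (mono z) \<noteq> 0"
  shows "wtw w = wtw z"
proof -
  obtain y where y: "ordered_of_weight (wtw w) y"
      "\<forall>\<Phi>. respects_relations C d \<Phi> \<longrightarrow> \<Phi> (mono w) = \<Phi> y"
    using straightening by blast
  have resp: "respects_relations C d (\<lambda>y. B y (mono z))"
    by (rule bosonic_form_respects_left[OF bf]) simp
  have "B (mono w) (mono z) = B y (mono z)" by (rule y(2)[rule_format, OF resp])
  also have "\<dots> = (\<Sum>w'\<in>{w'. y w' \<noteq> 0}. y w' * B (mono w') (mono z))"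
    using y(1) by (intro fin_linear_expand[OF respects_relations_linear[OF resp]])
      (simp add: ordered_of_weight_def)
  finally have "(\<Sum>w'\<in>{w'. y w' \<noteq> 0}. y w' * B (mono w') (mono z)) \<noteq> 0"
    using nz by simp
  then obtain w' where "y w' * B (mono w') (mono z) \<noteq> 0"
    using sum.not_neutral_contains_not_neutral by blast
  then have "y w' \<noteq> 0" and nz': "B (mono w') (mono z) \<noteq> 0" by auto
  then have "ordered_word w'" "wtw w' = wtw w"
    using y(1) unfolding ordered_of_weight_def by blast+
  with bosonic_form_ordered_nonzero_mset[OF bf _ z nz'] show ?thesis
    by (metis wtw_mset)
qed

lemma ordered_word_at_level [simp]: "ordered_word (at_level m a)"
  unfolding ordered_word_def at_level_def by (induction a) auto

lemma at_level_Nil [simp]: "at_level m [] = []"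
  by (simp add: at_level_def)

lemma at_level_Cons [simp]: "at_level m (j # a) = (j, m) # at_level m a"
  by (simp add: at_level_def)

lemma at_level_append: "at_level m (a @ b) = at_level m a @ at_level m b"
  unfolding at_level_def by simp

lemma set_at_level: "l \<in> set (at_level m a) \<Longrightarrow> snd l = m"
  unfolding at_level_def by auto

lemma level_block_at_level:
  "level_block m' (at_level m a) = (if m' = m then at_level m a else [])"
  unfolding level_block_def at_level_def by (induction a) auto

lemma map_fst_at_level [simp]: "map fst (at_level m a) = a"
  unfolding at_level_def by (induction a) auto

lemma at_level_level_block: "at_level m (map fst (level_block m x)) = level_block m x"
  unfolding at_level_def level_block_def by (induction x) auto

lemma bosonic_form_at_level:
  "bosonic_form C d B \<Longrightarrow> B (mono (at_level m a)) (mono (at_level m b)) = level_form C d a b"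
  using bosonic_form_ordered[of C d B "at_level m a" "at_level m b" "{m}"]
  by (auto simp: level_factor_def level_block_at_level dest: set_at_level)

text \<open>Symmetry of Lusztig's form is inherited from the symmetry of \<open>B\<close> on a single level.\<close>
lemma Lw_sym:
  assumes bf: "bosonic_form C d B" and dpos: "\<forall>j. d j > 0"
  shows "Lw C d u v = Lw C d v u"
proof -
  have "level_form C d u v = B (mono (at_level 0 u)) (mono (at_level 0 v))"
    by (rule bosonic_form_at_level[OF bf, symmetric])
  also have "\<dots> = B (mono (at_level 0 v)) (mono (at_level 0 u))"
    by (rule bosonic_form_sym[OF bf]) simp_all
  also have "\<dots> = level_form C d v u"
    by (rule bosonic_form_at_level[OF bf])
  finally have "level_form C d u v = level_form C d v u" .
  then show ?thesis unfolding level_form_def using kappa_nonzero[OF dpos] by (simp add: add.commute)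
qed

lemma kappa_mset_Cons:
  assumes "\<forall>j. d j > 0" "mset (i # w) = mset v"
  shows "kappa d (count (A + mset w)) = kappa d (count (A + mset v)) * inverse (kappa_i d i)"
proof -
  have "A + mset v = add_mset i (A + mset w)"
    by (simp add: assms(2)[symmetric])
  then have "kappa d (count (A + mset v)) = kappa d (count (A + mset w)) * kappa_i d i"
    by (simp add: kappa_add_mset)
  then show ?thesis using kappa_i_nonzero[of d i] assms(1) by simp
qed

lemma level_form_snoc_left:
  assumes sym: "\<And>a b. int (d a) * C a b = int (d b) * C b a"
  shows "level_form C d (a @ [i]) a' =
    kappa d (count (mset a + mset a')) * kappa_i d i * inverse (1 - qi d i 2) *
    qder_right C d i (-1) (Lw C d a) a'"
  using kappa_add_mset[of d i "mset a + mset a'"]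
  unfolding level_form_def Lw_snoc_qder_right[OF sym] by simp

lemma level_form_Cons_right:
  assumes bf: "bosonic_form C d B" and dpos: "\<forall>j. d j > 0"
  shows "level_form C d b (i # b') =
    kappa d (count (mset b + mset b')) * kappa_i d i * inverse (1 - qi d i 2) *
    qder_left C d i (-1) (Lw C d b') b"
  using kappa_add_mset[of d i "mset b + mset b'"] Lw_sym[OF bf dpos, of b "i # b'"]
  unfolding level_form_def Lw_Cons_qder_left by simp

lemma qder_left_level_form:
  assumes cii: "C i i = 2" and dpos: "\<forall>j. d j > 0"
  shows "qder_left C d i 1 (level_form C d a) a' =
    qi d i (sum_list (map (C i) a') - 2) * kappa d (count (mset a + mset a')) *
    inverse (kappa_i d i) * qder_right C d i (-1) (Lw C d a) a'"
proof -
  have "qder_left C d i 1 (level_form C d a) a' =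
      qi d i (sum_list (map (C i) a') - 2) * qder_right C d i (-1) (level_form C d a) a'"
    using qder_left_right[where C = C and i = i and d = d and sg = 1, OF cii] by simp
  also have "qder_right C d i (-1) (level_form C d a) a' =
      qder_right C d i (-1)
        (\<lambda>w. (kappa d (count (mset a + mset a')) * inverse (kappa_i d i)) * Lw C d a w) a'"
    by (rule qder_right_cong) (simp add: level_form_def kappa_mset_Cons[OF dpos])
  finally show ?thesis by (simp add: qder_right_scale mult.assoc)
qed

lemma qder_right_level_form:
  assumes bf: "bosonic_form C d B" and cii: "C i i = 2" and dpos: "\<forall>j. d j > 0"
  shows "qder_right C d i 1 (\<lambda>w. level_form C d w b') b =
    qi d i (sum_list (map (C i) b) - 2) * kappa d (count (mset b + mset b')) *
    inverse (kappa_i d i) * qder_left C d i (-1) (Lw C d b') b"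
proof -
  have "qder_right C d i 1 (\<lambda>w. level_form C d w b') b =
      qi d i (sum_list (map (C i) b) - 2) * qder_left C d i (-1) (\<lambda>w. level_form C d w b') b"
    using qder_left_right[where C = C and i = i and d = d and sg = "-1", OF cii,
        of "\<lambda>w. level_form C d w b'" b]
    by (simp add: qi_add[symmetric])
  also have "qder_left C d i (-1) (\<lambda>w. level_form C d w b') b =
      qder_left C d i (-1)
        (\<lambda>w. (kappa d (count (mset b + mset b')) * inverse (kappa_i d i)) * Lw C d b' w) b"
  proof (rule qder_left_cong)
    fix w assume "mset (i # w) = mset b"
    from kappa_mset_Cons[OF dpos this, of "mset b'"]
    show "level_form C d w b' =
        kappa d (count (mset b + mset b')) * inverse (kappa_i d i) * Lw C d b' w"
      unfolding level_form_def Lw_sym[OF bf dpos, of w b'] by (simp add: add.commute)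
  qed
  finally show ?thesis by (simp add: qder_left_scale mult.assoc)
qed

section \<open>Moving a generator across levels\<close>

lemma hpair_wtw_Nil [simp]: "hpair C i (wtw []) = 0"
  by (simp add: hpair_def wtw_def)

lemma hpair_wtw_Cons [simp]: "hpair C i (wtw ((j, m) # Y)) = sgn_pow (m + 1) * C i j + hpair C i (wtw Y)"
proof -
  have "(\<Sum>j'\<in>UNIV. C i j' * (if j = j' then sgn_pow (m + 1) else 0)) = sgn_pow (m + 1) * C i j"
    by (simp add: if_distrib[of "(*) _"] sum.delta cong: if_cong)
  then show ?thesis
    unfolding hpair_def wtw_Cons fst_conv snd_conv by (simp add: distrib_left sum.distrib)
qed

lemma hpair_wtw_append: "hpair C i (wtw (X @ Y)) = hpair C i (wtw X) + hpair C i (wtw Y)"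
  by (induction X) auto

lemma hpair_wtw_at_level: "hpair C i (wtw (at_level m a)) = sgn_pow (m + 1) * sum_list (map (C i) a)"
  by (induction a) (auto simp: algebra_simps)

lemma respects_relations_move_lower:
  assumes resp: "respects_relations C d \<Phi>" and sym: "\<And>a b. int (d a) * C a b = int (d b) * C b a"
    and L: "\<forall>l\<in>set L. snd l < k"
  shows "\<Phi> (mono (A @ L @ [(i, k + 1)] @ R)) =
    qi d i (- sgn_pow k * hpair C i (wtw L)) * \<Phi> (mono (A @ [(i, k + 1)] @ L @ R))"
  using L
proof (induction L arbitrary: A)
  case (Cons l L)
  obtain j m where l: "l = (j, m)" by fastforce
  with Cons.prems have "k + 1 > m + 1" by simp
  have "\<Phi> (mono (A @ (l # L) @ [(i, k + 1)] @ R)) =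
      qi d i (- sgn_pow k * hpair C i (wtw L)) * \<Phi> (mono (A @ [(j, m), (i, k + 1)] @ L @ R))"
    using Cons.IH[of "A @ [l]"] Cons.prems l by simp
  also have "\<Phi> (mono (A @ [(j, m), (i, k + 1)] @ L @ R)) =
      qi d j (sgn_pow (k + 1 - m + 1) * C j i) * \<Phi> (mono (A @ [(i, k + 1), (j, m)] @ L @ R))"
    by (rule respects_relations_far[OF resp]) fact
  also have "qi d j (sgn_pow (k + 1 - m + 1) * C j i) = qi d i (- sgn_pow k * (sgn_pow (m + 1) * C i j))"
    using qi_symmetrized[of d j C i, OF sym[of j i]] by (simp add: sgn_pow_def)
  finally show ?case using l by (simp add: qi_add[symmetric] algebra_simps)
qed simp

lemma respects_relations_move_higher:
  assumes resp: "respects_relations C d \<Phi>" and H: "\<forall>l\<in>set H. k + 1 < snd l"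
  shows "\<Phi> (mono (A @ [(i, k)] @ H @ R)) =
    qi d i (sgn_pow k * hpair C i (wtw H)) * \<Phi> (mono (A @ H @ [(i, k)] @ R))"
  using H
proof (induction H arbitrary: A)
  case (Cons l H)
  obtain j p where l: "l = (j, p)" by fastforce
  with Cons.prems have "p > k + 1" by simp
  have "\<Phi> (mono (A @ [(i, k)] @ (l # H) @ R)) =
      qi d i (sgn_pow (p - k + 1) * C i j) * \<Phi> (mono ((A @ [(j, p)]) @ [(i, k)] @ H @ R))"
    using respects_relations_far[OF resp \<open>p > k + 1\<close>, of A i j "H @ R"] l by simp
  also have "\<Phi> (mono ((A @ [(j, p)]) @ [(i, k)] @ H @ R)) =
      qi d i (sgn_pow k * hpair C i (wtw H)) * \<Phi> (mono ((A @ [(j, p)]) @ H @ [(i, k)] @ R))"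
    using Cons.IH[of "A @ [(j, p)]"] Cons.prems by simp
  also have "sgn_pow (p - k + 1) = sgn_pow k * sgn_pow (p + 1)"
    by (simp add: sgn_pow_def)
  finally show ?case using l by (simp add: qi_add[symmetric] algebra_simps)
qed simp

text \<open>Passing through the adjacent level is where the \<open>\<delta>\<^sub>i\<^sub>,\<^sub>j (1 - q\<^sub>i\<^sup>2)\<close> term of the defining
  relation contributes; the contributions add up to a skew derivation.\<close>
lemma respects_relations_move_through_below:
  assumes resp: "respects_relations C d \<Phi>" and sym: "\<And>a b. int (d a) * C a b = int (d b) * C b a"
  shows "\<Phi> (mono (A @ at_level k b @ [(i, k + 1)] @ R)) =
    qi d i (sum_list (map (C i) b)) * \<Phi> (mono (A @ [(i, k + 1)] @ at_level k b @ R)) +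
    (1 - qi d i 2) * qder_right C d i 1 (\<lambda>w. \<Phi> (mono (A @ at_level k w @ R))) b"
proof (induction b arbitrary: A)
  case (Cons j b)
  have "\<Phi> (mono (A @ at_level k (j # b) @ [(i, k + 1)] @ R)) =
      qi d i (sum_list (map (C i) b)) * \<Phi> (mono (A @ [(j, k), (i, k + 1)] @ at_level k b @ R)) +
      (1 - qi d i 2) * qder_right C d i 1 (\<lambda>w. \<Phi> (mono ((A @ [(j, k)]) @ at_level k w @ R))) b"
    using Cons.IH[of "A @ [(j, k)]"] by simp
  also have "\<Phi> (mono (A @ [(j, k), (i, k + 1)] @ at_level k b @ R)) =
      qi d j (C j i) * \<Phi> (mono (A @ [(i, k + 1), (j, k)] @ at_level k b @ R)) +
      (if j = i then (1 - qi d j 2) * \<Phi> (mono (A @ at_level k b @ R)) else 0)"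
    by (rule respects_relations_adjacent[OF resp])
  also have "qi d j (C j i) = qi d i (C i j)"
    using qi_symmetrized[of d j C i 1] sym[of j i] by simp
  finally show ?case
    by (cases "j = i") (simp_all add: qi_add algebra_simps)
qed simp

lemma respects_relations_move_through_above:
  assumes resp: "respects_relations C d \<Phi>"
  shows "\<Phi> (mono (A @ [(i, k)] @ at_level (k + 1) a @ R)) =
    qi d i (sum_list (map (C i) a)) * \<Phi> (mono (A @ at_level (k + 1) a @ [(i, k)] @ R)) +
    (1 - qi d i 2) * qder_left C d i 1 (\<lambda>w. \<Phi> (mono (A @ at_level (k + 1) w @ R))) a"
proof (induction a arbitrary: A)
  case (Cons j a)
  have "\<Phi> (mono (A @ [(i, k)] @ at_level (k + 1) (j # a) @ R)) =
      qi d i (C i j) * \<Phi> (mono ((A @ [(j, k + 1)]) @ [(i, k)] @ at_level (k + 1) a @ R)) +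
      (if i = j then (1 - qi d i 2) * \<Phi> (mono (A @ at_level (k + 1) a @ R)) else 0)"
    using respects_relations_adjacent[OF resp, of A i k j "at_level (k + 1) a @ R"] by simp
  also have "\<Phi> (mono ((A @ [(j, k + 1)]) @ [(i, k)] @ at_level (k + 1) a @ R)) =
      qi d i (sum_list (map (C i) a)) * \<Phi> (mono ((A @ [(j, k + 1)]) @ at_level (k + 1) a @ [(i, k)] @ R)) +
      (1 - qi d i 2) * qder_left C d i 1 (\<lambda>w. \<Phi> (mono ((A @ [(j, k + 1)]) @ at_level (k + 1) w @ R))) a"
    by (rule Cons.IH)
  finally show ?case
    by (cases "j = i") (simp_all add: qi_add algebra_simps)
qed simp

section \<open>The adjunction on ordered monomials\<close>

definition level_frame :: "int \<Rightarrow> ('a \<times> int) list \<Rightarrow> ('a \<times> int) list \<Rightarrow> bool" where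
  "level_frame k H L \<longleftrightarrow> ordered_word H \<and> ordered_word L \<and>
     (\<forall>l\<in>set H. k + 1 < snd l) \<and> (\<forall>l\<in>set L. snd l < k)"

lemma ordered_word_frame_decomp:
  assumes "ordered_word x"
  obtains H a b L where "x = H @ at_level (k + 1) a @ at_level k b @ L" "level_frame k H L"
proof
  have "x = filter (\<lambda>l. k + 1 < snd l \<or> snd l = k + 1 \<or> snd l = k \<or> snd l < k) x"
    by (rule filter_True[symmetric]) auto
  also have "\<dots> = filter (\<lambda>l. k + 1 < snd l) x @ level_block (k + 1) x @ level_block k x @
                   filter (\<lambda>l. snd l < k) x"
    unfolding level_block_def by (subst ordered_word_filter_disj[OF assms], force, force)+ simp
  finally show "x = filter (\<lambda>l. k + 1 < snd l) x @ at_level (k + 1) (map fst (level_block (k + 1) x)) @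
      at_level k (map fst (level_block k x)) @ filter (\<lambda>l. snd l < k) x"
    by (simp only: at_level_level_block)
  show "level_frame k (filter (\<lambda>l. k + 1 < snd l) x) (filter (\<lambda>l. snd l < k) x)"
    using assms by (simp add: level_frame_def ordered_word_filter)
qed

lemma ordered_word_framed:
  "level_frame k H L \<Longrightarrow> ordered_word (H @ at_level (k + 1) a @ at_level k b @ L)"
  unfolding level_frame_def ordered_word_append by (fastforce dest: set_at_level)

lemma level_block_framed:
  assumes "level_frame k H L"
  shows "level_block m (H @ at_level (k + 1) a @ at_level k b @ L) =
    (if m = k + 1 then at_level (k + 1) a else if m = k then at_level k b else level_block m (H @ L))"
proof -
  have "m = k + 1 \<or> m = k \<Longrightarrow> level_block m H = [] \<and> level_block m L = []"
    using assms unfolding level_frame_def by (auto intro!: level_block_Nil)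
  then show ?thesis by (auto simp: level_block_append level_block_at_level)
qed

lemma bosonic_form_framed:
  assumes bf: "bosonic_form C d B" and F: "level_frame k H L" and F': "level_frame k H' L'"
  shows "B (mono (H @ at_level (k + 1) a @ at_level k b @ L)) (mono (H' @ at_level (k + 1) a' @ at_level k b' @ L'))
    = B (mono (H @ L)) (mono (H' @ L')) * level_form C d a a' * level_form C d b b'"
proof -
  let ?x = "H @ at_level (k + 1) a @ at_level k b @ L" and ?z = "H' @ at_level (k + 1) a' @ at_level k b' @ L'"
  define T where "T = snd ` set (H @ L @ H' @ L')"
  have T: "finite T" "k \<notin> T" "k + 1 \<notin> T"
    using F F' unfolding T_def level_frame_def by fastforce+
  have ordered: "ordered_word (H @ L)" "ordered_word (H' @ L')"
    using F F' unfolding level_frame_def ordered_word_append by fastforce+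
  have "B (mono ?x) (mono ?z) = (\<Prod>m\<in>insert (k + 1) (insert k T). level_factor C d m ?x ?z)"
    by (rule bosonic_form_ordered[OF bf ordered_word_framed[OF F] ordered_word_framed[OF F']])
      (auto simp: T_def dest: set_at_level)
  also have "\<dots> = level_factor C d (k + 1) ?x ?z * (level_factor C d k ?x ?z *
      (\<Prod>m\<in>T. level_factor C d m ?x ?z))"
    using T by simp
  also have "level_factor C d (k + 1) ?x ?z = level_form C d a a'"
    by (simp add: level_factor_def level_block_framed[OF F] level_block_framed[OF F'])
  also have "level_factor C d k ?x ?z = level_form C d b b'"
    by (simp add: level_factor_def level_block_framed[OF F] level_block_framed[OF F'])
  also have "(\<Prod>m\<in>T. level_factor C d m ?x ?z) = (\<Prod>m\<in>T. level_factor C d m (H @ L) (H' @ L'))"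
    using T by (intro prod.cong)
      (auto simp: level_factor_def level_block_framed[OF F] level_block_framed[OF F'])
  also have "(\<Prod>m\<in>T. level_factor C d m (H @ L) (H' @ L')) = B (mono (H @ L)) (mono (H' @ L'))"
    by (rule bosonic_form_ordered[OF bf ordered, symmetric]) (auto simp: T_def)
  finally show ?thesis by (simp add: ac_simps)
qed

lemma level_frame_mset_eq:
  assumes "level_frame k H L" "level_frame k H' L'" "mset (H @ L) = mset (H' @ L')"
  shows "mset H = mset H'"
proof -
  have "filter (\<lambda>l. k + 1 < snd l) (H @ L) = H" "filter (\<lambda>l. k + 1 < snd l) (H' @ L') = H'"
    using assms(1,2) unfolding level_frame_def by (fastforce intro!: filter_True filter_False)+
  then show ?thesis by (metis assms(3) mset_filter)
qed

lemma bosonic_form_framed_snoc: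
  assumes bf: "bosonic_form C d B" and sym: "\<And>a b. int (d a) * C a b = int (d b) * C b a"
    and F: "level_frame k H L" and F': "level_frame k H' L'"
  shows "B (mono ((H @ at_level (k + 1) a @ at_level k b @ L) @ [(i, k + 1)]))
           (mono (H' @ at_level (k + 1) a' @ at_level k b' @ L')) =
    qi d i (- sgn_pow k * hpair C i (wtw L)) * B (mono (H @ L)) (mono (H' @ L')) *
      (qi d i (sum_list (map (C i) b)) * level_form C d (a @ [i]) a' * level_form C d b b' +
       (1 - qi d i 2) * level_form C d a a' * qder_right C d i 1 (\<lambda>w. level_form C d w b') b)"
proof -
  let ?z = "mono (H' @ at_level (k + 1) a' @ at_level k b' @ L')"
  have resp: "respects_relations C d (\<lambda>y. B y ?z)"
    by (rule bosonic_form_respects_left[OF bf]) simp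
  have framed: "B (mono (H @ at_level (k + 1) a1 @ at_level k b1 @ L)) ?z =
      B (mono (H @ L)) (mono (H' @ L')) * level_form C d a1 a' * level_form C d b1 b'" for a1 b1
    by (rule bosonic_form_framed[OF bf F F'])
  have L: "\<forall>l\<in>set L. snd l < k" using F by (simp add: level_frame_def)
  have "B (mono ((H @ at_level (k + 1) a @ at_level k b @ L) @ [(i, k + 1)])) ?z =
      qi d i (- sgn_pow k * hpair C i (wtw L)) *
      B (mono ((H @ at_level (k + 1) a) @ at_level k b @ [(i, k + 1)] @ L)) ?z"
    using respects_relations_move_lower[OF resp sym L,
        of "H @ at_level (k + 1) a @ at_level k b" i "[]"] by simp
  also have "B (mono ((H @ at_level (k + 1) a) @ at_level k b @ [(i, k + 1)] @ L)) ?z =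
      qi d i (sum_list (map (C i) b)) * B (mono (H @ at_level (k + 1) (a @ [i]) @ at_level k b @ L)) ?z +
      (1 - qi d i 2) * qder_right C d i 1 (\<lambda>w. B (mono (H @ at_level (k + 1) a @ at_level k w @ L)) ?z) b"
    using respects_relations_move_through_below[OF resp sym, of "H @ at_level (k + 1) a" k b i L]
    by (simp add: at_level_append)
  finally show ?thesis
    unfolding framed by (simp add: qder_right_scale_right algebra_simps)
qed

lemma bosonic_form_framed_Cons:
  assumes bf: "bosonic_form C d B" and F: "level_frame k H L" and F': "level_frame k H' L'"
  shows "B (mono (H @ at_level (k + 1) a @ at_level k b @ L))
           (mono ((i, k) # H' @ at_level (k + 1) a' @ at_level k b' @ L')) =
    qi d i (sgn_pow k * hpair C i (wtw H')) * B (mono (H @ L)) (mono (H' @ L')) *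
      (qi d i (sum_list (map (C i) a')) * level_form C d a a' * level_form C d b (i # b') +
       (1 - qi d i 2) * level_form C d b b' * qder_left C d i 1 (level_form C d a) a')"
proof -
  let ?x = "mono (H @ at_level (k + 1) a @ at_level k b @ L)"
  have resp: "respects_relations C d (\<lambda>y. B ?x y)"
    by (rule bosonic_form_respects_right[OF bf]) simp
  have framed: "B ?x (mono (H' @ at_level (k + 1) a1 @ at_level k b1 @ L')) =
      B (mono (H @ L)) (mono (H' @ L')) * level_form C d a a1 * level_form C d b b1" for a1 b1
    by (rule bosonic_form_framed[OF bf F F'])
  have H': "\<forall>l\<in>set H'. k + 1 < snd l" using F' by (simp add: level_frame_def)
  have "B ?x (mono ((i, k) # H' @ at_level (k + 1) a' @ at_level k b' @ L')) =
      qi d i (sgn_pow k * hpair C i (wtw H')) *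
      B ?x (mono (H' @ [(i, k)] @ at_level (k + 1) a' @ at_level k b' @ L'))"
    using respects_relations_move_higher[OF resp H', of "[]"] by simp
  also have "B ?x (mono (H' @ [(i, k)] @ at_level (k + 1) a' @ at_level k b' @ L')) =
      qi d i (sum_list (map (C i) a')) * B ?x (mono (H' @ at_level (k + 1) a' @ at_level k (i # b') @ L')) +
      (1 - qi d i 2) * qder_left C d i 1 (\<lambda>w. B ?x (mono (H' @ at_level (k + 1) w @ at_level k b' @ L'))) a'"
    using respects_relations_move_through_above[OF resp, of H' i k a' "at_level k b' @ L'"] by simp
  finally show ?thesis
    unfolding framed by (simp add: qder_left_scale_right algebra_simps)
qed

lemma finite_cartanD:
  assumes "finite_cartan C d"
  shows "C i i = 2" "\<forall>j. d j > 0" "\<And>a b. int (d a) * C a b = int (d b) * C b a"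
  using assms unfolding finite_cartan_def by auto

lemma level_form_snoc_qder_left:
  assumes fc: "finite_cartan C d"
  shows "qi d i (sum_list (map (C i) a) + 1) * level_form C d (a @ [i]) a' =
    (1 - qi d i 2) * qder_left C d i 1 (level_form C d a) a'"
proof -
  note cartan = finite_cartanD[OF fc]
  define D where "D = qder_right C d i (-1) (Lw C d a) a'"
  define Z where "Z = kappa d (count (mset a + mset a'))"
  have "D \<noteq> 0 \<Longrightarrow> sum_list (map (C i) a') = sum_list (map (C i) a) + 2"
  proof -
    assume "D \<noteq> 0"
    then obtain w where "mset (i # w) = mset a'" "Lw C d a w \<noteq> 0"
      unfolding D_def by (blast dest: qder_right_nonzero)
    then have "mset (i # a) = mset a'" by (simp add: Lw_nonzero_mset)
    then show ?thesis using sum_list_map_mset_eq[of "i # a" a' "C i"] cartan(1) by simp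
  qed
  then have exponent: "qi d i (sum_list (map (C i) a) + 1) * D =
      qi d i 1 * qi d i (sum_list (map (C i) a') - 2) * D"
    by (cases "D = 0") (simp_all add: qi_add[symmetric] add.commute)
  have "qi d i (sum_list (map (C i) a) + 1) * level_form C d (a @ [i]) a' =
      (qi d i (sum_list (map (C i) a) + 1) * D) * Z * (kappa_i d i * inverse (1 - qi d i 2))"
    unfolding level_form_snoc_left[OF cartan(3)] D_def Z_def by (simp add: mult_ac)
  also have "\<dots> = qi d i (sum_list (map (C i) a') - 2) * D * Z *
      (qi d i 1 * kappa_i d i * inverse (1 - qi d i 2))"
    unfolding exponent by (simp add: mult_ac)
  also have "\<dots> = (1 - qi d i 2) * qder_left C d i 1 (level_form C d a) a'"
    unfolding qi_kappa_i_balance[of d i, OF cartan(2)[rule_format]] qder_left_level_form[OF cartan(1,2)]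
      D_def Z_def by (simp add: mult_ac)
  finally show ?thesis .
qed

lemma level_form_Cons_qder_right:
  assumes fc: "finite_cartan C d" and bf: "bosonic_form C d B"
  shows "qi d i (1 - sum_list (map (C i) b)) * (1 - qi d i 2) * qder_right C d i 1 (\<lambda>w. level_form C d w b') b
    = level_form C d b (i # b')"
proof -
  note cartan = finite_cartanD[OF fc]
  define E where "E = qder_left C d i (-1) (Lw C d b') b"
  define Z where "Z = kappa d (count (mset b + mset b'))"
  have exponent: "qi d i (1 - sum_list (map (C i) b)) * qi d i (sum_list (map (C i) b) - 2) = inverse (qi d i 1)"
    by (simp add: qi_add[symmetric] qi_uminus[symmetric])
  have "inverse (qi d i 1) * (1 - qi d i 2) * inverse (kappa_i d i) =
      inverse (qi d i 1) * (qi d i 1 * kappa_i d i * inverse (1 - qi d i 2))"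
    unfolding qi_kappa_i_balance[of d i, OF cartan(2)[rule_format]] by (simp add: mult.assoc)
  also have "\<dots> = kappa_i d i * inverse (1 - qi d i 2)"
    by (simp add: mult.assoc[symmetric])
  finally have balance: "inverse (qi d i 1) * (1 - qi d i 2) * inverse (kappa_i d i) =
      kappa_i d i * inverse (1 - qi d i 2)" .
  have "qi d i (1 - sum_list (map (C i) b)) * (1 - qi d i 2) * qder_right C d i 1 (\<lambda>w. level_form C d w b') b
      = (qi d i (1 - sum_list (map (C i) b)) * qi d i (sum_list (map (C i) b) - 2)) *
        (1 - qi d i 2) * inverse (kappa_i d i) * Z * E"
    unfolding qder_right_level_form[OF bf cartan(1,2)] E_def Z_def by (simp add: mult_ac)
  also have "\<dots> = (inverse (qi d i 1) * (1 - qi d i 2) * inverse (kappa_i d i)) * Z * E"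
    unfolding exponent by (simp add: mult_ac)
  also have "\<dots> = level_form C d b (i # b')"
    unfolding balance level_form_Cons_right[OF bf cartan(2)] E_def Z_def by (simp add: mult_ac)
  finally show ?thesis .
qed

lemma bosonic_form_frame_hpair:
  assumes bf: "bosonic_form C d B" and F: "level_frame k H L" and F': "level_frame k H' L'"
    and nz: "B (mono (H @ L)) (mono (H' @ L')) \<noteq> 0"
  shows "hpair C i (wtw H) = hpair C i (wtw H')"
proof -
  have "ordered_word (H @ L)" "ordered_word (H' @ L')"
    using F F' unfolding level_frame_def ordered_word_append by fastforce+
  with bosonic_form_ordered_nonzero_mset[OF bf _ _ nz] have "mset (H @ L) = mset (H' @ L')"
    by blast
  with level_frame_mset_eq[OF F F'] show ?thesis by (metis wtw_mset)
qed

lemma qi_hpair_framed: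
  "qi d i (sgn_pow k * hpair C i (wtw (H @ at_level (k + 1) a @ at_level k b @ L)) + 1) *
     qi d i (- sgn_pow k * hpair C i (wtw L)) =
   qi d i (sgn_pow k * hpair C i (wtw H)) *
     qi d i (sum_list (map (C i) a) - sum_list (map (C i) b) + 1)"
proof -
  define s where "s = sgn_pow k"
  have "s * hpair C i (wtw (H @ at_level (k + 1) a @ at_level k b @ L)) =
      s * (hpair C i (wtw H) + s * sum_list (map (C i) a) - s * sum_list (map (C i) b) + hpair C i (wtw L))"
    unfolding s_def by (simp add: hpair_wtw_append hpair_wtw_at_level sgn_pow_def)
  also have "\<dots> = s * hpair C i (wtw H) + (s * s) * sum_list (map (C i) a) -
      (s * s) * sum_list (map (C i) b) + s * hpair C i (wtw L)"
    by (simp add: algebra_simps)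
  finally have "s * hpair C i (wtw (H @ at_level (k + 1) a @ at_level k b @ L)) + 1 + - s * hpair C i (wtw L) =
      s * hpair C i (wtw H) + (sum_list (map (C i) a) - sum_list (map (C i) b) + 1)"
    using sgn_pow_square[of k] unfolding s_def by simp
  then show ?thesis unfolding s_def by (metis qi_add)
qed

lemma bosonic_form_snoc_adjoint_framed:
  fixes a b a' b' :: "'i::finite list"
  assumes fc: "finite_cartan C d" and bf: "bosonic_form C d B"
    and F: "level_frame k H L" and F': "level_frame k H' L'"
  defines "x \<equiv> H @ at_level (k + 1) a @ at_level k b @ L"
    and "z \<equiv> H' @ at_level (k + 1) a' @ at_level k b' @ L'"
  shows "qi d i (sgn_pow k * hpair C i (wtw x) + 1) * B (mono (x @ [(i, k + 1)])) (mono z) =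
    B (mono x) (mono ((i, k) # z))"
proof -
  define R0 where "R0 = B (mono (H @ L)) (mono (H' @ L'))"
  define Sa where "Sa = sum_list (map (C i) a)"
  define Sb where "Sb = sum_list (map (C i) b)"
  define Sa' where "Sa' = sum_list (map (C i) a')"
  define Q where "Q = 1 - qi d i 2"
  define DR where "DR = qder_right C d i 1 (\<lambda>w. level_form C d w b') b"
  have "qi d i (sgn_pow k * hpair C i (wtw x) + 1) * B (mono (x @ [(i, k + 1)])) (mono z) =
      qi d i (sgn_pow k * hpair C i (wtw H)) * R0 *
      (level_form C d b b' * ((qi d i (Sa - Sb + 1) * qi d i Sb) * level_form C d (a @ [i]) a') +
       qi d i (Sa - Sb + 1) * level_form C d a a' * (Q * DR))"
    unfolding x_def z_def bosonic_form_framed_snoc[OF bf finite_cartanD(3)[OF fc] F F']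
      mult.assoc[symmetric] qi_hpair_framed
    by (simp add: R0_def Sa_def Sb_def Q_def DR_def algebra_simps)
  also have "\<dots> = qi d i (sgn_pow k * hpair C i (wtw H)) * R0 *
      (level_form C d b b' * (qi d i (Sa + 1) * level_form C d (a @ [i]) a') +
       qi d i Sa * level_form C d a a' * (qi d i (1 - Sb) * Q * DR))"
    by (simp add: qi_add[symmetric] mult_ac add_diff_eq diff_add_eq)
  also have "\<dots> = qi d i (sgn_pow k * hpair C i (wtw H)) * R0 *
      (Q * level_form C d b b' * qder_left C d i 1 (level_form C d a) a' +
       qi d i Sa * level_form C d a a' * level_form C d b (i # b'))"
    unfolding Sa_def Sb_def Q_def DR_def
      level_form_snoc_qder_left[OF fc] level_form_Cons_qder_right[OF fc bf] by (simp add: mult_ac)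
  also have "\<dots> = qi d i (sgn_pow k * hpair C i (wtw H')) * R0 *
      (qi d i Sa' * level_form C d a a' * level_form C d b (i # b') +
       Q * level_form C d b b' * qder_left C d i 1 (level_form C d a) a')"
  proof -
    have "R0 \<noteq> 0 \<Longrightarrow> hpair C i (wtw H) = hpair C i (wtw H')"
      unfolding R0_def by (rule bosonic_form_frame_hpair[OF bf F F'])
    moreover have "level_form C d a a' \<noteq> 0 \<Longrightarrow> Sa = Sa'"
      unfolding Sa_def Sa'_def by (blast dest: level_form_nonzero_mset intro: sum_list_map_mset_eq)
    ultimately show ?thesis
      by (cases "R0 = 0"; cases "level_form C d a a' = 0") (simp_all add: algebra_simps)
  qed
  also have "\<dots> = B (mono x) (mono ((i, k) # z))"
    unfolding x_def z_def R0_def Q_def Sa'_def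
    by (rule bosonic_form_framed_Cons[OF bf F F', symmetric])
  finally show ?thesis .
qed

lemma bosonic_form_snoc_adjoint_ordered:
  assumes fc: "finite_cartan C d" and bf: "bosonic_form C d B"
    and x: "ordered_word x" and z: "ordered_word z"
  shows "qi d i (sgn_pow k * hpair C i (wtw x) + 1) * B (mono (x @ [(i, k + 1)])) (mono z) =
    B (mono x) (mono ((i, k) # z))"
proof -
  obtain H a b L where "x = H @ at_level (k + 1) a @ at_level k b @ L" "level_frame k H L"
    using ordered_word_frame_decomp[OF x] .
  moreover obtain H' a' b' L' where "z = H' @ at_level (k + 1) a' @ at_level k b' @ L'"
    "level_frame k H' L'"
    using ordered_word_frame_decomp[OF z] .
  ultimately show ?thesis using bosonic_form_snoc_adjoint_framed[OF fc bf] by blast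
qed

text \<open>The mirror statement follows from the previous one by symmetry of \<open>B\<close>: with the roles of
  the two arguments exchanged, the scalars for \<open>f\<^sub>i\<^sub>,\<^sub>k\<^sub>-\<^sub>1\<close> and \<open>f\<^sub>i\<^sub>,\<^sub>k\<close> are inverse to each other,
  because the pairing vanishes unless both arguments have the same weight.\<close>
lemma bosonic_form_Cons_adjoint_ordered:
  assumes fc: "finite_cartan C d" and bf: "bosonic_form C d B"
    and x: "ordered_word x" and z: "ordered_word z"
  shows "qi d i (sgn_pow k * hpair C i (wtw x) + 1) * B (mono ((i, k - 1) # x)) (mono z) =
    B (mono x) (mono (z @ [(i, k)]))"
proof -
  define c where "c = qi d i (sgn_pow k * hpair C i (wtw x) + 1)"
  define c' where "c' = qi d i (sgn_pow (k - 1) * hpair C i (wtw z) + 1)"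
  define W where "W = B (mono ((i, k - 1) # x)) (mono z)"
  have "c' * B (mono x) (mono (z @ [(i, k)])) = W"
    using bosonic_form_snoc_adjoint_ordered[OF fc bf z x, of i "k - 1"]
      bosonic_form_sym[OF bf, of "mono x"] bosonic_form_sym[OF bf, of "mono z"]
    unfolding c'_def W_def by simp
  then have rhs: "B (mono x) (mono (z @ [(i, k)])) = inverse c' * W"
    unfolding c'_def by (simp add: field_simps)
  have "W \<noteq> 0 \<Longrightarrow> c = inverse c'"
  proof -
    assume "W \<noteq> 0"
    then have "wtw ((i, k - 1) # x) = wtw z"
      unfolding W_def by (rule bosonic_form_nonzero_wtw[OF bf z])
    then have "hpair C i (wtw z) = sgn_pow k * 2 + hpair C i (wtw x)"
      using finite_cartanD(1)[OF fc] by (metis hpair_wtw_Cons add.commute diff_add_cancel)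
    then have "(sgn_pow k * hpair C i (wtw x) + 1) + (sgn_pow (k - 1) * hpair C i (wtw z) + 1) = 0"
      using sgn_pow_square[of k] by (simp add: sgn_pow_def algebra_simps split: if_splits)
    then have "c * c' = 1" unfolding c_def c'_def by (metis qi_add qi_0)
    then show "c = inverse c'" using inverse_unique[of c' c] by (simp add: mult.commute)
  qed
  then show ?thesis
    unfolding rhs c_def[symmetric] W_def[symmetric] by (cases "W = 0") simp_all
qed

lemma bosonic_form_snoc_adjoint:
  assumes fc: "finite_cartan C d" and bf: "bosonic_form C d B" and u: "homog \<beta> u" and v: "supp_fin v"
  shows "qi d i (sgn_pow k * hpair C i \<beta> + 1) * B (fmult u (gen (i, k + 1))) v = B u (fmult (gen (i, k)) v)"
proof (rule respects_relations2_eq_if_eq_ordered[where P = "\<lambda>\<beta>'. \<beta>' = \<beta>"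
      and \<Phi> = "\<lambda>u v. qi d i (sgn_pow k * hpair C i \<beta> + 1) * B (fmult u (gen (i, k + 1))) v"
      and \<Psi> = "\<lambda>u v. B u (fmult (gen (i, k)) v)"])
  fix x z :: "('a \<times> int) list" assume xz: "ordered_word x" "ordered_word z" and "wtw x = \<beta>"
  then show "qi d i (sgn_pow k * hpair C i \<beta> + 1) * B (fmult (mono x) (gen (i, k + 1))) (mono z) =
      B (mono x) (fmult (gen (i, k)) (mono z))"
    using bosonic_form_snoc_adjoint_ordered[OF fc bf xz, of i k] by (simp add: gen_def fmult_mono_mono)
qed (use u v in \<open>auto simp: homog_def gen_def intro!: respects_relations_scale
      respects_relations_mult_left respects_relations_mult_right
      bosonic_form_respects_left[OF bf] bosonic_form_respects_right[OF bf]\<close>)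

lemma bosonic_form_Cons_adjoint:
  assumes fc: "finite_cartan C d" and bf: "bosonic_form C d B" and u: "homog \<beta> u" and v: "supp_fin v"
  shows "qi d i (sgn_pow k * hpair C i \<beta> + 1) * B (fmult (gen (i, k - 1)) u) v = B u (fmult v (gen (i, k)))"
proof (rule respects_relations2_eq_if_eq_ordered[where P = "\<lambda>\<beta>'. \<beta>' = \<beta>"
      and \<Phi> = "\<lambda>u v. qi d i (sgn_pow k * hpair C i \<beta> + 1) * B (fmult (gen (i, k - 1)) u) v"
      and \<Psi> = "\<lambda>u v. B u (fmult v (gen (i, k)))"])
  fix x z :: "('a \<times> int) list" assume xz: "ordered_word x" "ordered_word z" and "wtw x = \<beta>"
  then show "qi d i (sgn_pow k * hpair C i \<beta> + 1) * B (fmult (gen (i, k - 1)) (mono x)) (mono z) =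
      B (mono x) (fmult (mono z) (gen (i, k)))"
    using bosonic_form_Cons_adjoint_ordered[OF fc bf xz, of i k] by (simp add: gen_def fmult_mono_mono)
qed (use u v in \<open>auto simp: homog_def gen_def intro!: respects_relations_scale
      respects_relations_mult_left respects_relations_mult_right
      bosonic_form_respects_left[OF bf] bosonic_form_respects_right[OF bf]\<close>)

theorem corollary6p5:
  fixes C :: "'i::finite \<Rightarrow> 'i \<Rightarrow> int" and d :: "'i \<Rightarrow> nat"
    and B :: "(('i \<times> int) list \<Rightarrow> K) \<Rightarrow> (('i \<times> int) list \<Rightarrow> K) \<Rightarrow> K"
    and i :: 'i and k :: int and \<beta> :: "'i \<Rightarrow> int" and u :: "('i \<times> int) list \<Rightarrow> K"
  assumes "finite_cartan C d"
    and "bosonic_form C d B"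
    and "homog \<beta> u"
  shows "is_Eprime B i k u
           (smul (qi d i (sgn_pow k * hpair C i \<beta> + 1)) (fmult u (gen (i, k + 1))))
       \<and> is_Estar B i k u
           (smul (qi d i (sgn_pow k * hpair C i \<beta> + 1)) (fmult (gen (i, k - 1)) u))"
proof -
  have u: "supp_fin u" using assms(3) by (simp add: homog_def)
  have "B (smul c y) v = c * B y v" if "supp_fin y" "supp_fin v" for c y v
    using bosonic_form_linear_left[OF assms(2) that(2)] that(1) by (rule fin_linear_smul)
  with u show ?thesis
    unfolding is_Eprime_def is_Estar_def
    using bosonic_form_snoc_adjoint[OF assms] bosonic_form_Cons_adjoint[OF assms] by simp
qed

end
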